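(* Let $v$ be a weight on $[0,1)$ satisfying $\lim_{r\to1^-}v(r)=0$ and let $t\in[0,1)$. Then $$\sigma_{pt}(C_t;H^\infty_v)=\sigma_{pt}(C_t;H^0_v)=\Big\{\tfrac{1}{m+1}: m\in\mathbb{N}_0\Big\}$$ and $$\sigma(C_t;H^\infty_v)=\sigma(C_t;H^0_v)=\Big\{\tfrac{1}{m+1}: m\in\mathbb{N}_0\Big\}\cup\{0\}.$$
   Context: $\mathbb{N}_0=\{0,1,2,\dots\}$, $\mathbb{D}=\{z\in\mathbb{C}:|z|<1\}$, and $H(\mathbb{D})$ is the space of holomorphic functions on $\mathbb{D}$. A weight is a continuous non-increasing function $v\colon[0,1)\to(0,\infty)$, extended to $\mathbb{D}$ by $v(z):=v(|z|)$. $H^\infty_v=\{f\in H(\mathbb{D}):\|f\|_{\infty,v}:=\sup_{z\in\mathbb{D}}|f(z)|v(z)<\infty\}$ and $H^0_v=\{f\in H(\mathbb{D}):\lim_{|z|\to1^-}|f(z)|v(z)=0\}$, both Banach spaces with the norm $\|\cdot\|_{\infty,v}$. For $t\in[0,1]$ the generalized Cesàro operator $C_t$ is defined on $f\in H(\mathbb{D})$ by $C_tf(0)=f(0)$ and $C_tf(z)=\frac{1}{z}\int_0^z\frac{f(\xi)}{1-t\xi}\,d\xi$ for $z\neq 0$. For a bounded operator $T$ on a Banach space $X$, $\sigma(T;X)$ is the set of $\lambda\in\mathbb{C}$ for which $\lambda I-T$ has no continuous inverse on $X$, and $\sigma_{pt}(T;X)$ is the set of $\lambda$ for which $\lambda I-T$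 is not injective. *)

theory Defs
  imports "HOL-Complex_Analysis.Complex_Analysis"
begin

abbreviation disc :: "complex set" where "disc \<equiv> ball 0 1"

definition is_weight :: "(real \<Rightarrow> real) \<Rightarrow> bool" where
  "is_weight v \<longleftrightarrow> continuous_on {0..<1} v
     \<and> (\<forall>r s. 0 \<le> r \<longrightarrow> r \<le> s \<longrightarrow> s < 1 \<longrightarrow> v s \<le> v r)
     \<and> (\<forall>r. 0 \<le> r \<longrightarrow> r < 1 \<longrightarrow> 0 < v r)"

definition wnorm :: "(real \<Rightarrow> real) \<Rightarrow> (complex \<Rightarrow> complex) \<Rightarrow> real" where
  "wnorm v f = (SUP z\<in>disc. cmod (f z) * v (cmod z))"

definition Hinf :: "(real \<Rightarrow> real) \<Rightarrow> (complex \<Rightarrow> complex) set" where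
  "Hinf v = {f. f holomorphic_on disc \<and> (\<exists>M. \<forall>z\<in>disc. cmod (f z) * v (cmod z) \<le> M)}"

definition H0 :: "(real \<Rightarrow> real) \<Rightarrow> (complex \<Rightarrow> complex) set" where
  "H0 v = {f. f holomorphic_on disc \<and>
      (\<forall>e>0. \<exists>r<1. \<forall>z. r < cmod z \<and> cmod z < 1 \<longrightarrow> cmod (f z) * v (cmod z) < e)}"

definition cesaro :: "real \<Rightarrow> (complex \<Rightarrow> complex) \<Rightarrow> (complex \<Rightarrow> complex)" where
  "cesaro t f z = (if z = 0 then f 0
     else contour_integral (linepath 0 z) (\<lambda>\<xi>. f \<xi> / (1 - of_real t * \<xi>)) / z)"

text \<open>Spectrum of an operator T on the function space X (elements identified when
  equal on the disc), normed by N: c is NOT in the spectrum iff c I - T has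
  a continuous (= bounded, since the inverse of a linear map is linear) inverse on X.\<close>
definition spec :: "((complex \<Rightarrow> complex) \<Rightarrow> (complex \<Rightarrow> complex)) \<Rightarrow> (complex \<Rightarrow> complex) set
    \<Rightarrow> ((complex \<Rightarrow> complex) \<Rightarrow> real) \<Rightarrow> complex set" where
  "spec T X N = {c. \<not> (\<exists>S. (\<forall>g\<in>X. S g \<in> X)
      \<and> (\<forall>f\<in>X. \<forall>z\<in>disc. S (\<lambda>w. c * f w - T f w) z = f z)
      \<and> (\<forall>g\<in>X. \<forall>z\<in>disc. c * S g z - T (S g) z = g z)
      \<and> (\<exists>C. \<forall>g\<in>X. N (S g) \<le> C * N g))}"

definition pspec :: "((complex \<Rightarrow> complex) \<Rightarrow> (complex \<Rightarrow> complex)) \<Rightarrow> (complex \<Rightarrow> complex) set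
    \<Rightarrow> complex set" where
  "pspec T X = {c. \<exists>f\<in>X. (\<exists>z\<in>disc. f z \<noteq> 0) \<and> (\<forall>z\<in>disc. c * f z - T f z = 0)}"

end

theory Submission
  imports Defs
begin

text \<open>
  \<open>C_t f (z) = \<integral>\<^sub>0\<^sup>1 f (s z) / (1 - t s z) ds\<close>, so \<open>z C_t f\<close> is a primitive of \<open>f / (1 - t z)\<close>. An
  eigenfunction for \<open>c\<close> therefore satisfies \<open>c (z f)' = f / (1 - t z)\<close>; comparing lowest order terms
  at \<open>0\<close> gives \<open>c = 1/(m+1)\<close>, and \<open>z\<^sup>m / (1 - t z)\<^sup>m\<^sup>+\<^sup>1\<close> is an eigenfunction for it, lying in every
  weighted space. For \<open>c\<close> outside \<open>{1/(m+1)} \<union> {0}\<close>, subtract from \<open>g\<close> a combination of the first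
  \<open>N\<close> eigenfunctions so that the rest vanishes to order \<open>N\<close> at \<open>0\<close>. By the maximum modulus principle
  \<open>C_t\<close> has norm at most \<open>1/((N+1)(1-t)) < |c|\<close> on such functions, so a Neumann series solves
  \<open>(c - C_t) u = g\<close> there, with a bound linear in the norm of \<open>g\<close>. Conversely, a bounded inverse of
  \<open>c - C_t\<close> has norm at least \<open>1/|c - 1/(m+1)|\<close> for all \<open>m\<close>, which is impossible for \<open>c = 0\<close>. Since
  \<open>v\<close> vanishes at the boundary, \<open>C_t\<close> maps \<open>H\<^sup>\<infinity>\<^sub>v\<close> into \<open>H\<^sup>0\<^sub>v\<close>, which carries everything over to \<open>H\<^sup>0\<^sub>v\<close>.
\<close>

section \<open>Weights and weighted bounds\<close>

lemma weight_pos: "is_weight v \<Longrightarrow> 0 \<le> r \<Longrightarrow> r < 1 \<Longrightarrow> 0 < v r"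
  by (simp add: is_weight_def)

lemma weight_antimono: "is_weight v \<Longrightarrow> 0 \<le> r \<Longrightarrow> r \<le> s \<Longrightarrow> s < 1 \<Longrightarrow> v s \<le> v r"
  by (simp add: is_weight_def)

lemma weight_pos_norm: "is_weight v \<Longrightarrow> z \<in> disc \<Longrightarrow> 0 < v (cmod z)"
  by (simp add: weight_pos)

definition wbounded :: "(real \<Rightarrow> real) \<Rightarrow> (complex \<Rightarrow> complex) \<Rightarrow> real \<Rightarrow> bool" where
  "wbounded v f B \<longleftrightarrow> (\<forall>z\<in>disc. cmod (f z) * v (cmod z) \<le> B)"

lemma wboundedD: "wbounded v f B \<Longrightarrow> z \<in> disc \<Longrightarrow> cmod (f z) * v (cmod z) \<le> B"
  by (simp add: wbounded_def)

lemma wbounded_nonneg: "is_weight v \<Longrightarrow> wbounded v f B \<Longrightarrow> 0 \<le> B"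
  using wboundedD[of v f B 0] weight_pos[of v 0]
  by (simp add: order_trans[OF mult_nonneg_nonneg[OF norm_ge_zero less_imp_le]])

lemma wbounded_mono: "wbounded v f B \<Longrightarrow> B \<le> B' \<Longrightarrow> wbounded v f B'"
  by (auto simp: wbounded_def intro: order_trans)

lemma wbounded_cong: "(\<And>z. z \<in> disc \<Longrightarrow> f z = g z) \<Longrightarrow> wbounded v f B \<longleftrightarrow> wbounded v g B"
  by (simp add: wbounded_def)

lemma wbounded_lincomb:
  assumes w: "is_weight v" and f: "wbounded v f A" and g: "wbounded v g B"
  shows "wbounded v (\<lambda>z. a * f z + b * g z) (cmod a * A + cmod b * B)"
  unfolding wbounded_def
proof
  fix z assume z: "z \<in> disc"
  have "cmod (a * f z + b * g z) * v (cmod z)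
      \<le> (cmod a * cmod (f z) + cmod b * cmod (g z)) * v (cmod z)"
    using weight_pos_norm[OF w z] norm_triangle_ineq[of "a * f z" "b * g z"]
    by (intro mult_right_mono) (auto simp: norm_mult)
  also have "\<dots> = cmod a * (cmod (f z) * v (cmod z)) + cmod b * (cmod (g z) * v (cmod z))"
    by (simp add: algebra_simps)
  also have "\<dots> \<le> cmod a * A + cmod b * B"
    using wboundedD[OF f z] wboundedD[OF g z] by (intro add_mono mult_left_mono) auto
  finally show "cmod (a * f z + b * g z) * v (cmod z) \<le> cmod a * A + cmod b * B" .
qed

lemma wbounded_cmult: "is_weight v \<Longrightarrow> wbounded v f B \<Longrightarrow> wbounded v (\<lambda>z. a * f z) (cmod a * B)"
  using wbounded_lincomb[of v f B f B a 0] by simp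

lemma wbounded_sum:
  assumes w: "is_weight v" and "finite A" and "\<And>m. m \<in> A \<Longrightarrow> wbounded v (F m) (B m)"
  shows "wbounded v (\<lambda>z. \<Sum>m\<in>A. F m z) (\<Sum>m\<in>A. B m)"
  using assms(2,3)
proof (induction A rule: finite_induct)
  case empty
  then show ?case by (simp add: wbounded_def)
next
  case (insert m A)
  then show ?case
    using wbounded_lincomb[OF w, of "F m" "B m" _ _ 1 1] by simp
qed

lemma wbounded_norm_le:
  assumes w: "is_weight v" and B: "wbounded v f B" and z: "cmod z \<le> \<rho>" "\<rho> < 1"
  shows "cmod (f z) \<le> B / v \<rho>"
proof -
  have zd: "z \<in> disc" using z by simp
  have "cmod (f z) * v \<rho> \<le> cmod (f z) * v (cmod z)"
    using weight_antimono[OF w norm_ge_zero z] by (simp add: mult_left_mono)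
  also have "\<dots> \<le> B" using wboundedD[OF B zd] .
  finally show ?thesis
    using weight_pos[OF w order_trans[OF norm_ge_zero z(1)] z(2)] by (simp add: field_simps)
qed

lemma Hinf_iff: "f \<in> Hinf v \<longleftrightarrow> f holomorphic_on disc \<and> (\<exists>B. wbounded v f B)"
  by (simp add: Hinf_def wbounded_def)

lemma wnorm_le: "wbounded v f B \<Longrightarrow> wnorm v f \<le> B"
  unfolding wnorm_def wbounded_def by (rule cSUP_least) auto

lemma wbounded_wnorm: "wbounded v f B \<Longrightarrow> wbounded v f (wnorm v f)"
  unfolding wnorm_def wbounded_def by (auto intro!: cSUP_upper bdd_aboveI2)

lemma wnorm_cong: "(\<And>z. z \<in> disc \<Longrightarrow> f z = g z) \<Longrightarrow> wnorm v f = wnorm v g"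
  unfolding wnorm_def by (rule SUP_cong) auto

lemma wnorm_pos:
  assumes "is_weight v" "wbounded v f B" "z \<in> disc" "f z \<noteq> 0"
  shows "0 < wnorm v f"
proof -
  have "0 < cmod (f z) * v (cmod z)"
    using assms weight_pos_norm[OF assms(1,3)] by simp
  also have "\<dots> \<le> wnorm v f"
    by (rule wboundedD[OF wbounded_wnorm[OF assms(2)] assms(3)])
  finally show ?thesis .
qed

abbreviation to_boundary :: "complex filter" where
  "to_boundary \<equiv> filtercomap cmod (at_left 1)"

lemma eventually_to_boundary:
  "eventually P to_boundary \<longleftrightarrow> (\<exists>r<1. \<forall>z. r < cmod z \<and> cmod z < 1 \<longrightarrow> P z)"
proof
  assume "eventually P to_boundary"
  then obtain Q r where "r < 1" "\<And>y. r < y \<Longrightarrow> y < 1 \<Longrightarrow> Q y" "\<And>z. Q (cmod z) \<Longrightarrow> P z"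
    unfolding eventually_filtercomap eventually_at_left_field by blast
  then show "\<exists>r<1. \<forall>z. r < cmod z \<and> cmod z < 1 \<longrightarrow> P z" by blast
next
  assume "\<exists>r<1. \<forall>z. r < cmod z \<and> cmod z < 1 \<longrightarrow> P z"
  then obtain r where "r < 1" "\<And>z. r < cmod z \<Longrightarrow> cmod z < 1 \<Longrightarrow> P z" by blast
  then show "eventually P to_boundary"
    unfolding eventually_filtercomap eventually_at_left_field
    by (intro exI[of _ "\<lambda>y. r < y \<and> y < 1"]) blast
qed

lemma H0_iff_tendsto:
  assumes "is_weight v"
  shows "f \<in> H0 v \<longleftrightarrow> f holomorphic_on disc \<and> ((\<lambda>z. of_real (v (cmod z)) * f z) \<longlongrightarrow> 0) to_boundary"
proof -
  have "dist (of_real (v (cmod z)) * f z) 0 = cmod (f z) * v (cmod z)" if "cmod z < 1" for z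
    using weight_pos[OF assms norm_ge_zero that] by (simp add: norm_mult)
  then have "(\<forall>z. r < cmod z \<and> cmod z < 1 \<longrightarrow> cmod (f z) * v (cmod z) < e) \<longleftrightarrow>
      (\<forall>z. r < cmod z \<and> cmod z < 1 \<longrightarrow> dist (of_real (v (cmod z)) * f z) 0 < e)" for r e
    by metis
  then show ?thesis
    unfolding H0_def tendsto_iff eventually_to_boundary by simp
qed

lemma H0_lincomb:
  assumes w: "is_weight v" and f: "f \<in> H0 v" and g: "g \<in> H0 v"
  shows "(\<lambda>z. a * f z + b * g z) \<in> H0 v"
proof -
  have "((\<lambda>z. a * (of_real (v (cmod z)) * f z) + b * (of_real (v (cmod z)) * g z)) \<longlongrightarrow> a * 0 + b * 0)
      to_boundary"
    using f g unfolding H0_iff_tendsto[OF w] by (intro tendsto_intros) auto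
  moreover have "(\<lambda>z. a * f z + b * g z) holomorphic_on disc"
    using f g unfolding H0_iff_tendsto[OF w] by (intro holomorphic_intros) auto
  ultimately show ?thesis
    unfolding H0_iff_tendsto[OF w] by (simp add: algebra_simps)
qed

lemma H0_cong:
  assumes f: "f \<in> H0 v" and fg: "\<And>z. z \<in> disc \<Longrightarrow> f z = g z"
  shows "g \<in> H0 v"
proof -
  have "(\<forall>z. r < cmod z \<and> cmod z < 1 \<longrightarrow> cmod (f z) * v (cmod z) < e) \<longleftrightarrow>
      (\<forall>z. r < cmod z \<and> cmod z < 1 \<longrightarrow> cmod (g z) * v (cmod z) < e)" for r e
    using fg by auto
  moreover have "g holomorphic_on disc"
    using holomorphic_transform[of f disc g] f fg by (simp add: H0_def)
  ultimately show ?thesis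
    using f unfolding H0_def by simp
qed

lemma H0_subset_Hinf:
  assumes w: "is_weight v" and f: "f \<in> H0 v"
  shows "f \<in> Hinf v"
proof -
  have "\<exists>r<1. \<forall>z. r < cmod z \<and> cmod z < 1 \<longrightarrow> cmod (f z) * v (cmod z) < 1"
    using f unfolding H0_def by simp
  then obtain r where r: "r < 1" and near: "\<And>z. r < cmod z \<Longrightarrow> cmod z < 1 \<Longrightarrow> cmod (f z) * v (cmod z) < 1"
    by blast
  define r0 where "r0 = max r 0"
  have "compact (f ` cball 0 r0)"
    using r f unfolding H0_def r0_def
    by (intro compact_continuous_image holomorphic_on_imp_continuous_on) (auto elim: holomorphic_on_subset)
  then obtain M where M: "\<And>z. z \<in> cball 0 r0 \<Longrightarrow> cmod (f z) \<le> M"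
    by (meson compact_imp_bounded bounded_iff imageI)
  have "wbounded v f (max 1 (M * v 0))"
    unfolding wbounded_def
  proof
    fix z assume z: "z \<in> disc"
    show "cmod (f z) * v (cmod z) \<le> max 1 (M * v 0)"
    proof (cases "cmod z \<le> r0")
      case True
      then have "cmod (f z) * v (cmod z) \<le> M * v 0"
        using M[of z] weight_antimono[OF w, of 0 "cmod z"] weight_pos_norm[OF w z] z
        by (intro mult_mono) (auto intro: order_trans[OF norm_ge_zero])
      then show ?thesis by simp
    next
      case False
      then have "r < cmod z" by (simp add: r0_def)
      then show ?thesis using near z by (intro max.coboundedI1 less_imp_le) auto
    qed
  qed
  then show ?thesis
    using f unfolding Hinf_iff H0_def by blast
qed

section \<open>The integral representation of the Cesaro operator\<close>

lemma scaled_in_disc: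
  assumes "z \<in> disc" "0 \<le> s" "s \<le> 1"
  shows "of_real s * z \<in> disc" and "cmod (of_real s * z) \<le> cmod z"
proof -
  show le: "cmod (of_real s * z) \<le> cmod z"
    using assms by (simp add: norm_mult mult_left_le_one_le)
  then show "of_real s * z \<in> disc" using assms(1) by simp
qed

lemma norm_one_minus_ge:
  assumes "0 \<le> t" "cmod w \<le> 1"
  shows "1 - t \<le> cmod (1 - of_real t * w)"
proof -
  have "cmod (of_real t * w) \<le> t"
    using assms by (simp add: norm_mult mult_left_le)
  moreover have "1 - cmod (of_real t * w) \<le> cmod (1 - of_real t * w)"
    by (metis norm_one norm_triangle_ineq2)
  ultimately show ?thesis by linarith
qed

lemma one_minus_nonzero:
  assumes "0 \<le> t" "t < 1" "cmod w \<le> 1"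
  shows "1 - of_real t * w \<noteq> 0"
  using norm_one_minus_ge[OF assms(1,3)] assms(2) by auto

lemma cesaro_has_integral:
  assumes f: "f holomorphic_on disc" and z: "z \<in> disc" and t: "0 \<le> t" "t < 1"
  shows "((\<lambda>s. f (of_real s * z) / (1 - of_real t * (of_real s * z))) has_integral cesaro t f z) {0..1}"
proof (cases "z = 0")
  case True
  then show ?thesis using has_integral_const_real[of "f 0" 0 1] by (simp add: cesaro_def)
next
  case False
  let ?g = "\<lambda>\<xi>. f \<xi> / (1 - of_real t * \<xi>)"
  have segment: "closed_segment 0 z \<subseteq> disc"
    using z by (simp add: closed_segment_subset convex_ball)
  have "continuous_on (closed_segment 0 z) ?g"
    using segment one_minus_nonzero[OF t] z
    by (intro continuous_intros continuous_on_subset[OF holomorphic_on_imp_continuous_on[OF f]])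
       (auto simp: less_imp_le)
  then have "(?g has_contour_integral contour_integral (linepath 0 z) ?g) (linepath 0 z)"
    by (intro has_contour_integral_integral contour_integrable_continuous_linepath)
  then have "((\<lambda>s. ?g (linepath 0 z s) * z) has_integral contour_integral (linepath 0 z) ?g) {0..1}"
    by (simp add: has_contour_integral_linepath)
  moreover have "linepath 0 z s = of_real s * z" for s
    by (simp add: linepath_def scaleR_conv_of_real)
  ultimately have "((\<lambda>s. ?g (of_real s * z) * z) has_integral contour_integral (linepath 0 z) ?g) {0..1}"
    by (simp only:)
  from has_integral_divide[OF this, of z] show ?thesis
    using False by (simp add: cesaro_def)
qed

lemma cesaro_eq_integral:
  assumes "f holomorphic_on disc" "z \<in> disc" "0 \<le> t" "t < 1"
  shows "cesaro t f z = integral {0..1} (\<lambda>s. f (of_real s * z) / (1 - of_real t * (of_real s * z)))"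
  using cesaro_has_integral[OF assms] by (simp add: integral_unique)

lemma cesaro_sum:
  assumes "finite A" "\<And>m. m \<in> A \<Longrightarrow> F m holomorphic_on disc"
    and z: "z \<in> disc" and t: "0 \<le> t" "t < 1"
  shows "cesaro t (\<lambda>w. \<Sum>m\<in>A. F m w) z = (\<Sum>m\<in>A. cesaro t (F m) z)"
proof -
  have "((\<lambda>s. \<Sum>m\<in>A. F m (of_real s * z) / (1 - of_real t * (of_real s * z)))
      has_integral (\<Sum>m\<in>A. cesaro t (F m) z)) {0..1}"
    using assms by (intro has_integral_sum cesaro_has_integral)
  then have "((\<lambda>s. (\<Sum>m\<in>A. F m (of_real s * z)) / (1 - of_real t * (of_real s * z)))
      has_integral (\<Sum>m\<in>A. cesaro t (F m) z)) {0..1}"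
    by (simp only: sum_divide_distrib)
  moreover have "(\<lambda>w. \<Sum>m\<in>A. F m w) holomorphic_on disc"
    using assms by (intro holomorphic_intros)
  ultimately show ?thesis
    using cesaro_has_integral[OF _ z t] has_integral_unique by blast
qed

lemma cesaro_lincomb:
  assumes "f holomorphic_on disc" "g holomorphic_on disc" "z \<in> disc" "0 \<le> t" "t < 1"
  shows "cesaro t (\<lambda>w. a * f w + b * g w) z = a * cesaro t f z + b * cesaro t g z"
proof -
  have "((\<lambda>s. a * (f (of_real s * z) / (1 - of_real t * (of_real s * z)))
      + b * (g (of_real s * z) / (1 - of_real t * (of_real s * z))))
      has_integral (a * cesaro t f z + b * cesaro t g z)) {0..1}"
    using assms by (intro has_integral_add has_integral_mult_right cesaro_has_integral)
  then have "((\<lambda>s. (a * f (of_real s * z) + b * g (of_real s * z)) / (1 - of_real t * (of_real s * z)))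
      has_integral (a * cesaro t f z + b * cesaro t g z)) {0..1}"
    by (simp only: add_divide_distrib times_divide_eq_right)
  moreover have "(\<lambda>w. a * f w + b * g w) holomorphic_on disc"
    using assms by (intro holomorphic_intros)
  ultimately show ?thesis
    using cesaro_has_integral[OF _ assms(3-5)] has_integral_unique by blast
qed

lemma cesaro_cmult:
  "f holomorphic_on disc \<Longrightarrow> z \<in> disc \<Longrightarrow> 0 \<le> t \<Longrightarrow> t < 1 \<Longrightarrow>
    cesaro t (\<lambda>w. a * f w) z = a * cesaro t f z"
  using cesaro_lincomb[of f f z t a 0] by simp

lemma cesaro_add:
  "f holomorphic_on disc \<Longrightarrow> g holomorphic_on disc \<Longrightarrow> z \<in> disc \<Longrightarrow> 0 \<le> t \<Longrightarrow> t < 1 \<Longrightarrow>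
    cesaro t (\<lambda>w. f w + g w) z = cesaro t f z + cesaro t g z"
  using cesaro_lincomb[of f g z t 1 1] by simp

lemma cesaro_diff:
  "f holomorphic_on disc \<Longrightarrow> g holomorphic_on disc \<Longrightarrow> z \<in> disc \<Longrightarrow> 0 \<le> t \<Longrightarrow> t < 1 \<Longrightarrow>
    cesaro t (\<lambda>w. f w - g w) z = cesaro t f z - cesaro t g z"
  using cesaro_lincomb[of f g z t 1 "-1"] by simp

lemma continuous_on_scaled:
  assumes "h holomorphic_on disc"
  shows "continuous_on (disc \<times> {0..1}) (\<lambda>p. h (of_real (snd p) * fst p))"
proof (rule continuous_on_compose2[OF holomorphic_on_imp_continuous_on[OF assms]])
  show "continuous_on (disc \<times> {0..1}) (\<lambda>p. of_real (snd p) * fst p :: complex)"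
    by (intro continuous_intros)
  show "(\<lambda>p. of_real (snd p) * fst p) ` (disc \<times> {0..1}) \<subseteq> disc"
    using scaled_in_disc by auto
qed

lemma holomorphic_on_cesaro_integral:
  assumes h: "h holomorphic_on disc" and t: "0 \<le> t" "t < 1"
  shows "(\<lambda>z. integral {0..1} (\<lambda>s. of_real s ^ N * h (of_real s * z) / (1 - of_real t * (of_real s * z))))
    holomorphic_on disc"
proof -
  define D where "D x s = 1 - of_real t * (of_real s * x)" for x :: complex and s :: real
  define fx where "fx x s = (of_real s ^ N * (deriv h (of_real s * x) * of_real s) * D x s
      + of_real s ^ N * h (of_real s * x) * (of_real t * of_real s)) / (D x s * D x s)" for x s
  have D: "D x s \<noteq> 0" if "x \<in> disc" "s \<in> {0..1}" for x s
    using one_minus_nonzero[OF t] scaled_in_disc[OF that(1)] that(2) unfolding D_def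
    by (metis atLeastAtMost_iff less_imp_le mem_ball_0)
  have "(\<lambda>x. integral (cbox 0 1) (\<lambda>s. of_real s ^ N * h (of_real s * x) / D x s)) holomorphic_on disc"
  proof (rule leibniz_rule_holomorphic[where fx = fx])
    fix x and s :: real assume x: "x \<in> disc" and s: "s \<in> cbox 0 1"
    have sx: "of_real s * x \<in> disc" using scaled_in_disc[OF x] s by auto
    have dh: "((\<lambda>x. h (of_real s * x)) has_field_derivative deriv h (of_real s * x) * of_real s) (at x)"
      by (rule DERIV_chain2[where g = "\<lambda>x. of_real s * x", OF holomorphic_derivI[OF h open_ball sx, where T = UNIV]])
         (auto intro!: derivative_eq_intros)
    have dD: "((\<lambda>x. D x s) has_field_derivative - (of_real t * of_real s)) (at x)"
      unfolding D_def by (auto intro!: derivative_eq_intros)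
    have "((\<lambda>x. of_real s ^ N * h (of_real s * x) / D x s) has_field_derivative fx x s) (at x)"
      using DERIV_divide[OF DERIV_cmult[OF dh] dD D[OF x]] s unfolding fx_def by simp
    then show "((\<lambda>x. of_real s ^ N * h (of_real s * x) / D x s) has_field_derivative fx x s) (at x within disc)"
      by (rule has_field_derivative_at_within)
  next
    fix x assume x: "x \<in> disc"
    have "continuous_on {0..1} (\<lambda>s::real. h (of_real s * x))"
      using scaled_in_disc[OF x]
      by (intro continuous_on_compose2[OF holomorphic_on_imp_continuous_on[OF h]] continuous_intros) auto
    then have "continuous_on {0..1} (\<lambda>s. of_real s ^ N * h (of_real s * x) / D x s)"
      using D[OF x] unfolding D_def by (intro continuous_intros) auto
    then show "(\<lambda>s. of_real s ^ N * h (of_real s * x) / D x s) integrable_on cbox 0 1"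
      by (simp add: integrable_continuous_interval)
  next
    have "continuous_on (disc \<times> {0..1}) (\<lambda>p. fx (fst p) (snd p))"
      unfolding fx_def D_def using D
      by (intro continuous_intros continuous_on_scaled h holomorphic_deriv[OF h open_ball]) (auto simp: D_def)
    then show "continuous_on (disc \<times> cbox 0 1) (\<lambda>(x, s). fx x s)"
      by (simp add: split_beta')
  qed (rule convex_ball)
  then show ?thesis by (simp add: D_def)
qed

lemma cesaro_holomorphic:
  assumes "f holomorphic_on disc" "0 \<le> t" "t < 1"
  shows "cesaro t f holomorphic_on disc"
  using holomorphic_transform[OF holomorphic_on_cesaro_integral[OF assms, of 0]]
    cesaro_eq_integral[OF assms(1) _ assms(2,3)] by simp

lemma cesaro_primitive:
  assumes t: "0 \<le> t" "t < 1" and z: "z \<in> disc"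
    and F: "\<And>w. w \<in> disc \<Longrightarrow> (F has_field_derivative f w / (1 - of_real t * w)) (at w)"
  shows "z * cesaro t f z = F z - F 0"
proof (cases "z = 0")
  case False
  have "path_image (linepath 0 z) \<subseteq> disc"
    using z by (simp add: closed_segment_subset convex_ball)
  from contour_integral_primitive[OF has_field_derivative_at_within[OF F] valid_path_linepath this]
  have "((\<lambda>w. f w / (1 - of_real t * w)) has_contour_integral F z - F 0) (linepath 0 z)"
    by simp
  then show ?thesis
    using False contour_integral_unique by (simp add: cesaro_def)
qed simp

lemma cesaro_primitive_exists:
  assumes "0 \<le> t" "t < 1" "f holomorphic_on disc"
  obtains F where "\<And>w. w \<in> disc \<Longrightarrow> (F has_field_derivative f w / (1 - of_real t * w)) (at w)"
proof -
  have "(\<lambda>w. f w / (1 - of_real t * w)) holomorphic_on disc"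
    using one_minus_nonzero[OF assms(1,2)] by (intro holomorphic_intros assms(3)) auto
  then obtain F where "\<And>w. w \<in> disc \<Longrightarrow> (F has_field_derivative f w / (1 - of_real t * w)) (at w within disc)"
    using holomorphic_convex_primitive'[OF convex_ball open_ball] by blast
  then show ?thesis
    using that at_within_open[OF _ open_ball] by metis
qed

lemma norm_cesaro_split_le:
  assumes f: "f holomorphic_on disc" and z: "z \<in> disc" and t: "0 \<le> t" "t < 1"
    and a: "0 \<le> a" "a \<le> 1"
    and M1: "\<And>s. 0 \<le> s \<Longrightarrow> s \<le> a \<Longrightarrow> cmod (f (of_real s * z)) \<le> M1"
    and M2: "\<And>s. a \<le> s \<Longrightarrow> s \<le> 1 \<Longrightarrow> cmod (f (of_real s * z)) \<le> M2"
  shows "cmod (cesaro t f z) \<le> (a * M1 + (1 - a) * M2) / (1 - t)"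
proof -
  let ?g = "\<lambda>s. f (of_real s * z) / (1 - of_real t * (of_real s * z))"
  have int: "?g integrable_on {0..1}"
    using cesaro_has_integral[OF f z t] by blast
  have bound: "cmod (?g s) \<le> M / (1 - t)" if "cmod (f (of_real s * z)) \<le> M" "0 \<le> s" "s \<le> 1" for s M
    unfolding norm_divide using that t z scaled_in_disc(2)[OF z, of s]
    by (intro frac_le norm_one_minus_ge) (auto intro: order_trans[OF norm_ge_zero])
  have "norm (integral {c..d} ?g) \<le> M / (1 - t) * (d - c)"
    if "0 \<le> c" "c \<le> d" "d \<le> 1" and M: "\<And>s. c \<le> s \<Longrightarrow> s \<le> d \<Longrightarrow> cmod (f (of_real s * z)) \<le> M"
    for c d M
  proof -
    have "(?g has_integral integral {c..d} ?g) (cbox c d)"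
      using integrable_subinterval_real[OF int] that(1-3) by (simp add: integrable_integral)
    from has_integral_bound[OF _ this, of "M / (1 - t)"] show ?thesis
      using that bound[OF M] M[of c] t by (force intro: order_trans[OF norm_ge_zero])
  qed
  from this[of 0 a M1] this[of a 1 M2]
  have "norm (integral {0..a} ?g) \<le> M1 / (1 - t) * a" "norm (integral {a..1} ?g) \<le> M2 / (1 - t) * (1 - a)"
    using a M1 M2 by auto
  moreover have "cesaro t f z = integral {0..a} ?g + integral {a..1} ?g"
    using Henstock_Kurzweil_Integration.integral_combine[OF a int] cesaro_eq_integral[OF f z t] by simp
  ultimately have "cmod (cesaro t f z) \<le> M1 / (1 - t) * a + M2 / (1 - t) * (1 - a)"
    using a norm_triangle_ineq[of "integral {0..a} ?g" "integral {a..1} ?g"] by simp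
  also have "\<dots> = (a * M1 + (1 - a) * M2) / (1 - t)"
    by (simp add: add_divide_distrib mult.commute)
  finally show ?thesis .
qed

lemma norm_cesaro_le:
  assumes "f holomorphic_on disc" "z \<in> disc" "0 \<le> t" "t < 1"
    and "\<And>s. 0 \<le> s \<Longrightarrow> s \<le> 1 \<Longrightarrow> cmod (f (of_real s * z)) \<le> M"
  shows "cmod (cesaro t f z) \<le> M / (1 - t)"
proof -
  have "cmod (cesaro t f z) \<le> (1 * M + (1 - 1) * M) / (1 - t)"
    by (rule norm_cesaro_split_le[OF assms(1-4)]) (use assms(5) assms(5)[of 1] in auto)
  then show ?thesis by simp
qed

lemma cesaro_uniform_limit:
  assumes t: "0 \<le> t" "t < 1" and z: "z \<in> disc"
    and F: "\<And>n. F n holomorphic_on disc" and f: "f holomorphic_on disc"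
    and lim: "uniform_limit (cball 0 (cmod z)) F f sequentially"
  shows "(\<lambda>n. cesaro t (F n) z) \<longlonglongrightarrow> cesaro t f z"
  unfolding tendsto_iff
proof (intro allI impI)
  fix e :: real assume e: "0 < e"
  have "eventually (\<lambda>n. \<forall>w\<in>cball 0 (cmod z). dist (F n w) (f w) < e * (1 - t) / 2) sequentially"
    using uniform_limitD[OF lim, of "e * (1 - t) / 2"] e t by simp
  then show "eventually (\<lambda>n. dist (cesaro t (F n) z) (cesaro t f z) < e) sequentially"
  proof (rule eventually_mono)
    fix n assume close: "\<forall>w\<in>cball 0 (cmod z). dist (F n w) (f w) < e * (1 - t) / 2"
    have "cmod (cesaro t (\<lambda>w. F n w - f w) z) \<le> e * (1 - t) / 2 / (1 - t)"
    proof (rule norm_cesaro_le[OF _ z t])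
      fix s :: real assume "0 \<le> s" "s \<le> 1"
      then show "cmod (F n (of_real s * z) - f (of_real s * z)) \<le> e * (1 - t) / 2"
        using close scaled_in_disc(2)[OF z] by (auto simp: dist_norm less_imp_le)
    qed (intro holomorphic_intros F f)
    also have "\<dots> = e / 2" using t by (simp add: field_simps)
    finally show "dist (cesaro t (F n) z) (cesaro t f z) < e"
      using cesaro_diff[OF F f z t] e by (simp add: dist_norm)
  qed
qed

lemma cesaro_weighted_split_le:
  assumes w: "is_weight v" and t: "0 \<le> t" "t < 1" and f: "f holomorphic_on disc"
    and B: "wbounded v f B" and z: "z \<in> disc" and a: "0 \<le> a" "a < 1"
  shows "cmod (cesaro t f z) * v (cmod z) \<le> B / (1 - t) * (v (cmod z) / v a + (1 - a))"
proof -
  have vz: "0 < v (cmod z)" and va: "0 < v a"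
    using weight_pos_norm[OF w z] weight_pos[OF w a] by auto
  have "cmod (cesaro t f z) \<le> (a * (B / v a) + (1 - a) * (B / v (cmod z))) / (1 - t)"
  proof (rule norm_cesaro_split_le[OF f z t a(1) less_imp_le[OF a(2)]])
    fix s assume s: "0 \<le> s" "s \<le> a"
    have "cmod (of_real s * z) \<le> s"
      using s z by (simp add: norm_mult mult_left_le)
    then show "cmod (f (of_real s * z)) \<le> B / v a"
      using wbounded_norm_le[OF w B _ a(2)] s by simp
  next
    fix s assume "a \<le> s" "s \<le> 1"
    then show "cmod (f (of_real s * z)) \<le> B / v (cmod z)"
      using wbounded_norm_le[OF w B scaled_in_disc(2)[OF z]] a z by simp
  qed
  then have "cmod (cesaro t f z) * v (cmod z)
      \<le> (a * (B / v a) + (1 - a) * (B / v (cmod z))) / (1 - t) * v (cmod z)"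
    by (rule mult_right_mono[OF _ less_imp_le[OF vz]])
  also have "\<dots> = B / (1 - t) * (a * (v (cmod z) / v a) + (1 - a))"
    using vz va t by (simp add: field_simps)
  also have "\<dots> \<le> B / (1 - t) * (v (cmod z) / v a + (1 - a))"
    using wbounded_nonneg[OF w B] t vz va a
    by (intro mult_left_mono add_right_mono mult_left_le_one_le) auto
  finally show ?thesis .
qed

lemma mult_le_small_less_half:
  fixes K e x :: real
  assumes "0 \<le> K" "0 < e" "x \<le> e / (2 * (K + 1))"
  shows "K * x < e / 2"
proof -
  have "K * x \<le> K * (e / (2 * (K + 1)))"
    using assms by (intro mult_left_mono) auto
  also have "\<dots> < e / 2"
    using assms by (simp add: field_simps)
  finally show ?thesis .
qed

text \<open>Since \<open>v\<close> vanishes at the boundary, the first term of the bound above is eventually small,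
  and the second is small once \<open>a\<close> is close to \<open>1\<close>.\<close>
lemma cesaro_in_H0:
  assumes w: "is_weight v" and v0: "(v \<longlongrightarrow> 0) (at_left 1)" and t: "0 \<le> t" "t < 1"
    and f: "f holomorphic_on disc" and B: "wbounded v f B"
  shows "cesaro t f \<in> H0 v"
  unfolding H0_def
proof (intro CollectI conjI allI impI cesaro_holomorphic[OF f t])
  fix e :: real assume e: "0 < e"
  define K where "K = B / (1 - t)"
  define a where "a = max 0 (1 - e / (2 * (K + 1)))"
  have K0: "0 \<le> K" using wbounded_nonneg[OF w B] t by (simp add: K_def)
  have a: "0 \<le> a" "a < 1" using e K0 by (auto simp: a_def)
  have Ka: "K * (1 - a) < e / 2"
    using e K0 by (intro mult_le_small_less_half) (auto simp: a_def)
  have va: "0 < v a" using weight_pos[OF w a(1,2)] .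
  have "eventually (\<lambda>r. v r < e / (2 * (K + 1)) * v a) (at_left 1)"
    using order_tendstoD(2)[OF v0] e va K0 by simp
  then obtain r where r: "r < 1" and vr: "\<And>y. r < y \<Longrightarrow> y < 1 \<Longrightarrow> v y < e / (2 * (K + 1)) * v a"
    unfolding eventually_at_left_field by blast
  show "\<exists>r<1. \<forall>z. r < cmod z \<and> cmod z < 1 \<longrightarrow> cmod (cesaro t f z) * v (cmod z) < e"
  proof (intro exI[of _ r] conjI allI impI r)
    fix z assume z: "r < cmod z \<and> cmod z < 1"
    have "K * (v (cmod z) / v a) < e / 2"
      using vr[of "cmod z"] z va K0 e by (intro mult_le_small_less_half) (auto simp: field_simps)
    then have "K * (v (cmod z) / v a + (1 - a)) < e"
      using Ka distrib_left[of K "v (cmod z) / v a" "1 - a"] by linarith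
    then show "cmod (cesaro t f z) * v (cmod z) < e"
      using cesaro_weighted_split_le[OF w t f B _ a(1,2), of z] z unfolding K_def by simp
  qed
qed

section \<open>Eigenfunctions and eigenvalues\<close>

definition cesaro_eigenfun :: "real \<Rightarrow> nat \<Rightarrow> complex \<Rightarrow> complex" where
  "cesaro_eigenfun t m z = z ^ m / (1 - of_real t * z) ^ Suc m"

lemma cesaro_eigenfun_holomorphic:
  "0 \<le> t \<Longrightarrow> t < 1 \<Longrightarrow> cesaro_eigenfun t m holomorphic_on disc"
  unfolding cesaro_eigenfun_def using one_minus_nonzero[of t]
  by (intro holomorphic_intros) auto

lemma cesaro_eigenfun_nonzero:
  "0 \<le> t \<Longrightarrow> t < 1 \<Longrightarrow> z \<in> disc \<Longrightarrow> z \<noteq> 0 \<Longrightarrow> cesaro_eigenfun t m z \<noteq> 0"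
  unfolding cesaro_eigenfun_def using one_minus_nonzero[of t z] by simp

lemma cesaro_cesaro_eigenfun:
  assumes t: "0 \<le> t" "t < 1" and z: "z \<in> disc"
  shows "cesaro t (cesaro_eigenfun t m) z = cesaro_eigenfun t m z / of_nat (Suc m)"
proof (cases "z = 0")
  case True
  then show ?thesis by (cases m) (simp_all add: cesaro_def cesaro_eigenfun_def)
next
  case False
  define F where "F w = (w / (1 - of_real t * w)) ^ Suc m / of_nat (Suc m)" for w :: complex
  have "(F has_field_derivative cesaro_eigenfun t m w / (1 - of_real t * w)) (at w)"
    if w: "w \<in> disc" for w
  proof -
    have nz: "1 - of_real t * w \<noteq> 0" using one_minus_nonzero[OF t] w by simp
    have "((\<lambda>w. w / (1 - of_real t * w)) has_field_derivative 1 / (1 - of_real t * w)\<^sup>2) (at w)"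
      using nz by (auto intro!: derivative_eq_intros simp: field_simps power2_eq_square)
    from DERIV_cdivide[OF DERIV_power[OF this, of "Suc m"], of "of_nat (Suc m)"]
    show ?thesis
      unfolding F_def cesaro_eigenfun_def using nz
      by (simp add: power_divide power2_eq_square mult_ac del: of_nat_Suc)
  qed
  from cesaro_primitive[OF t z this]
  have "z * cesaro t (cesaro_eigenfun t m) z = F z" by (simp add: F_def)
  also have "F z = z * (cesaro_eigenfun t m z / of_nat (Suc m))"
    by (simp add: F_def cesaro_eigenfun_def power_divide del: of_nat_Suc)
  finally show ?thesis by (simp only: mult_left_cancel[OF False])
qed

lemma cesaro_eigenfun_shifted:
  "0 \<le> t \<Longrightarrow> t < 1 \<Longrightarrow> z \<in> disc \<Longrightarrow>
    c * cesaro_eigenfun t m z - cesaro t (cesaro_eigenfun t m) z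
      = (c - 1 / of_nat (Suc m)) * cesaro_eigenfun t m z"
  using cesaro_cesaro_eigenfun[of t z m] by (simp add: algebra_simps)

lemma wbounded_cesaro_eigenfun:
  assumes w: "is_weight v" and t: "0 \<le> t" "t < 1"
  shows "wbounded v (cesaro_eigenfun t m) (v 0 / (1 - t) ^ Suc m)"
  unfolding wbounded_def
proof
  fix z assume z: "z \<in> disc"
  have "cmod (cesaro_eigenfun t m z) = cmod z ^ m / cmod (1 - of_real t * z) ^ Suc m"
    unfolding cesaro_eigenfun_def norm_divide norm_power ..
  also have "\<dots> \<le> 1 / (1 - t) ^ Suc m"
    using z t norm_one_minus_ge[OF t(1), of z]
    by (intro frac_le power_mono power_le_one) auto
  finally have "cmod (cesaro_eigenfun t m z) * v (cmod z) \<le> 1 / (1 - t) ^ Suc m * v 0"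
    using weight_antimono[OF w, of 0 "cmod z"] weight_pos_norm[OF w z] z t
    by (intro mult_mono) auto
  then show "cmod (cesaro_eigenfun t m z) * v (cmod z) \<le> v 0 / (1 - t) ^ Suc m"
    by simp
qed

lemma cesaro_eigenfun_Hinf: "is_weight v \<Longrightarrow> 0 \<le> t \<Longrightarrow> t < 1 \<Longrightarrow> cesaro_eigenfun t m \<in> Hinf v"
  unfolding Hinf_iff using cesaro_eigenfun_holomorphic wbounded_cesaro_eigenfun by blast

lemma holomorphic_factor_at_0:
  assumes f: "f holomorphic_on disc" and z0: "z0 \<in> disc" "f z0 \<noteq> 0"
  obtains r g m where "0 < r" "ball 0 r \<subseteq> disc" "g holomorphic_on ball 0 r" "g 0 \<noteq> 0"
    "\<And>w. w \<in> ball 0 r \<Longrightarrow> f w = w ^ m * g w"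
proof (cases "f 0 = 0")
  case False
  then show ?thesis
    using that[of 1 f 0] f by auto
next
  case True
  have nonconst: "\<not> f constant_on disc"
    using z0 True unfolding constant_on_def by (metis centre_in_ball zero_less_one)
  obtain n r g where "0 < n" "0 < r" "ball 0 r \<subseteq> disc" "g holomorphic_on ball 0 r"
    and fg: "\<And>w. w \<in> ball 0 r \<Longrightarrow> f w = (w - 0) ^ n * g w"
    and g: "\<And>w. w \<in> ball 0 r \<Longrightarrow> g w \<noteq> 0"
    by (rule holomorphic_factor_zero_nonconstant[OF f open_ball connected_ball _ True nonconst]) auto
  moreover have "g 0 \<noteq> 0" using g \<open>0 < r\<close> by simp
  ultimately show ?thesis
    using that[of r g n] fg by simp
qed

lemma continuous_zero_off_centre:
  fixes P :: "'a::{real_normed_vector, perfect_space} \<Rightarrow> 'b::real_normed_vector"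
  assumes "continuous_on (ball a r) P" "0 < r" "\<And>w. w \<in> ball a r \<Longrightarrow> w \<noteq> a \<Longrightarrow> P w = 0"
  shows "P a = 0"
proof -
  have "(P \<longlongrightarrow> P a) (at a)"
    using assms(1,2) by (simp add: continuous_on_eq_continuous_at isCont_def)
  moreover have "(P \<longlongrightarrow> 0) (at a)"
    using assms(2,3) by (intro tendsto_eventually) (auto simp: eventually_at dist_commute intro!: exI[of _ r])
  ultimately show ?thesis
    by (rule tendsto_unique[rotated]) simp
qed

lemma cesaro_eigen_derivative:
  assumes t: "0 \<le> t" "t < 1" and f: "f holomorphic_on disc"
    and eigen: "\<And>z. z \<in> disc \<Longrightarrow> cesaro t f z = c * f z" and w: "w \<in> disc"
  shows "((\<lambda>z. c * (z * f z)) has_field_derivative f w / (1 - of_real t * w)) (at w)"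
proof -
  obtain F where F: "\<And>w. w \<in> disc \<Longrightarrow> (F has_field_derivative f w / (1 - of_real t * w)) (at w)"
    using cesaro_primitive_exists[OF t f] by blast
  have "((\<lambda>z. F z - F 0) has_field_derivative f w / (1 - of_real t * w)) (at w)"
    using DERIV_diff[OF F[OF w] DERIV_const] by simp
  then show ?thesis
  proof (rule has_field_derivative_transform_within_open[OF _ open_ball w])
    fix z assume z: "z \<in> disc"
    show "F z - F 0 = c * (z * f z)"
      using cesaro_primitive[OF t z F] eigen[OF z] by (metis mult.left_commute)
  qed
qed

text \<open>Writing \<open>f = z\<^sup>m g\<close> with \<open>g 0 \<noteq> 0\<close>, the eigenvalue equation \<open>c (z f)' = f / (1 - t z)\<close> becomes
  \<open>c ((m + 1) g + z g') = g / (1 - t z)\<close>; evaluate at \<open>0\<close>.\<close>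
lemma cesaro_eigenvalue:
  assumes t: "0 \<le> t" "t < 1" and f: "f holomorphic_on disc" and z0: "z0 \<in> disc" "f z0 \<noteq> 0"
    and eigen: "\<And>z. z \<in> disc \<Longrightarrow> cesaro t f z = c * f z"
  obtains m where "c = 1 / of_nat (Suc m)"
proof -
  obtain r g m where r: "0 < r" "ball 0 r \<subseteq> disc" and g: "g holomorphic_on ball 0 r" "g 0 \<noteq> 0"
    and fg: "\<And>w. w \<in> ball 0 r \<Longrightarrow> f w = w ^ m * g w"
    by (rule holomorphic_factor_at_0[OF f z0]) blast
  define P where "P w = c * (of_nat (Suc m) * g w + w * deriv g w) - g w / (1 - of_real t * w)" for w
  have P_zero: "P w = 0" if w: "w \<in> ball 0 r" "w \<noteq> 0" for w
  proof -
    have wd: "w \<in> disc" using w r by auto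
    have "((\<lambda>w. c * (w ^ Suc m * g w)) has_field_derivative
        c * (of_nat (Suc m) * w ^ m * g w + w ^ Suc m * deriv g w)) (at w)"
      using DERIV_cmult[OF DERIV_mult[OF DERIV_power[OF DERIV_ident, of "Suc m"]
        holomorphic_derivI[OF g(1) open_ball w(1), where T = UNIV]]]
      by (simp add: mult.commute[of "deriv g w"] mult.assoc del: of_nat_Suc power_Suc)
    moreover have "((\<lambda>w. c * (w ^ Suc m * g w)) has_field_derivative f w / (1 - of_real t * w)) (at w)"
    proof (rule has_field_derivative_transform_within_open[OF cesaro_eigen_derivative[OF t f eigen wd] open_ball w(1)])
      fix x :: complex assume "x \<in> ball 0 r"
      then show "c * (x * f x) = c * (x ^ Suc m * g x)" using fg by simp
    qed
    ultimately have "c * (of_nat (Suc m) * w ^ m * g w + w ^ Suc m * deriv g w) = f w / (1 - of_real t * w)"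
      by (rule DERIV_unique)
    then have "w ^ m * (c * (of_nat (Suc m) * g w + w * deriv g w)) = w ^ m * (g w / (1 - of_real t * w))"
      using fg[OF w(1)] by (simp add: algebra_simps del: of_nat_Suc)
    with w(2) have "c * (of_nat (Suc m) * g w + w * deriv g w) = g w / (1 - of_real t * w)"
      by (metis mult_left_cancel power_eq_0_iff)
    then show ?thesis
      by (simp add: P_def)
  qed
  have P_cont: "continuous_on (ball 0 r) P"
    unfolding P_def using one_minus_nonzero[OF t] r
    by (intro continuous_intros holomorphic_on_imp_continuous_on[OF g(1)]
        holomorphic_on_imp_continuous_on[OF holomorphic_deriv[OF g(1) open_ball]]) auto
  from continuous_zero_off_centre[OF P_cont r(1) P_zero]
  have "c * of_nat (Suc m) = 1"
    using g(2) by (simp add: P_def algebra_simps del: of_nat_Suc)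
  then show ?thesis
    using that[of m] by (simp add: field_simps del: of_nat_Suc)
qed

lemma cesaro_shift_injective:
  assumes t: "0 \<le> t" "t < 1" and f: "f holomorphic_on disc" and g: "g holomorphic_on disc"
    and c: "\<And>m. c \<noteq> 1 / of_nat (Suc m)"
    and eq: "\<And>z. z \<in> disc \<Longrightarrow> c * f z - cesaro t f z = c * g z - cesaro t g z"
    and z: "z \<in> disc"
  shows "f z = g z"
proof (rule ccontr)
  assume "f z \<noteq> g z"
  then have nz: "f z - g z \<noteq> 0" by simp
  have hol: "(\<lambda>w. f w - g w) holomorphic_on disc"
    by (intro holomorphic_intros f g)
  have "cesaro t (\<lambda>w. f w - g w) w = c * (f w - g w)" if "w \<in> disc" for w
    using eq[OF that] cesaro_diff[OF f g that t] by algebra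
  from cesaro_eigenvalue[OF t hol z nz this] obtain m where "c = 1 / of_nat (Suc m)" .
  with c show False by blast
qed

section \<open>Functions vanishing to a given order at the origin\<close>

definition vanishes_to_order :: "nat \<Rightarrow> (complex \<Rightarrow> complex) \<Rightarrow> bool" where
  "vanishes_to_order N f \<longleftrightarrow> (\<exists>h. h holomorphic_on disc \<and> (\<forall>w\<in>disc. f w = w ^ N * h w))"

lemma vanishes_to_order_0: "f holomorphic_on disc \<Longrightarrow> vanishes_to_order 0 f"
  unfolding vanishes_to_order_def by auto

lemma vanishes_to_order_SucI:
  assumes h: "h holomorphic_on disc" and h0: "h 0 = 0" and f: "\<And>w. w \<in> disc \<Longrightarrow> f w = w ^ N * h w"
  shows "vanishes_to_order (Suc N) f"
proof -
  define \<psi> where "\<psi> z = (if z = 0 then deriv h 0 else (h z - h 0) / (z - 0))" for z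
  have "\<psi> holomorphic_on disc"
    unfolding \<psi>_def by (rule pole_lemma[OF h]) simp
  moreover have "f w = w ^ Suc N * \<psi> w" if "w \<in> disc" for w
    using f[OF that] h0 by (cases "w = 0") (auto simp: \<psi>_def)
  ultimately show ?thesis
    unfolding vanishes_to_order_def by blast
qed

lemma norm_vanishing_quotient_le:
  assumes w: "is_weight v" and h: "h holomorphic_on disc" and fh: "\<And>w. w \<in> disc \<Longrightarrow> f w = w ^ N * h w"
    and B: "wbounded v f B" and r: "0 < r" "r < 1" and z: "cmod z \<le> r"
  shows "cmod (h z) \<le> B / (r ^ N * v r)"
proof (rule maximum_modulus_frontier[of h "cball 0 r"])
  have sub: "cball 0 r \<subseteq> disc" using r by auto
  show "h holomorphic_on interior (cball 0 r)"
    using holomorphic_on_subset[OF h] sub ball_subset_cball by (metis interior_cball order_trans)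
  show "continuous_on (closure (cball 0 r)) h"
    using holomorphic_on_imp_continuous_on[OF holomorphic_on_subset[OF h sub]] by simp
next
  fix w :: complex assume "w \<in> frontier (cball 0 r)"
  then have wr: "cmod w = r" and wd: "w \<in> disc" using r by auto
  have "cmod (h w) * (r ^ N * v r) = cmod (f w) * v (cmod w)"
    using fh[OF wd] wr by (simp add: norm_mult norm_power)
  also have "\<dots> \<le> B" using wboundedD[OF B wd] .
  finally show "cmod (h w) \<le> B / (r ^ N * v r)"
    using weight_pos[OF w _ r(2)] r by (simp add: field_simps)
qed (use z in auto)

lemma norm_vanishing_scaled_le:
  assumes w: "is_weight v" and f: "vanishes_to_order N f" and B: "wbounded v f B"
    and z: "z \<in> disc" and s: "0 \<le> s" "s \<le> 1"
  shows "cmod (f (of_real s * z)) * v (cmod z) \<le> s ^ N * B"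
proof -
  obtain h where h: "h holomorphic_on disc" and fh: "\<And>w. w \<in> disc \<Longrightarrow> f w = w ^ N * h w"
    using f unfolding vanishes_to_order_def by blast
  show ?thesis
  proof (cases "z = 0")
    case True
    then show ?thesis
      using wboundedD[OF B z] fh[OF z] wbounded_nonneg[OF w B] s by (cases N) auto
  next
    case False
    let ?r = "cmod z"
    have r: "0 < ?r" "?r < 1" using False z by auto
    have vr: "0 < v ?r" using weight_pos_norm[OF w z] .
    have "cmod (f (of_real s * z)) = s ^ N * ?r ^ N * cmod (h (of_real s * z))"
      using fh[OF scaled_in_disc(1)[OF z s]] s by (simp add: norm_mult norm_power power_mult_distrib)
    also have "\<dots> \<le> s ^ N * ?r ^ N * (B / (?r ^ N * v ?r))"
      using norm_vanishing_quotient_le[OF w h fh B r scaled_in_disc(2)[OF z s]] s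
      by (intro mult_left_mono) auto
    also have "\<dots> = s ^ N * B / v ?r" using r vr by (simp add: field_simps)
    finally show ?thesis using vr by (simp add: field_simps)
  qed
qed

lemma power_has_integral_01: "((\<lambda>s::real. s ^ N) has_integral 1 / real (Suc N)) {0..1}"
proof -
  have "((\<lambda>s::real. s ^ N) has_integral 1 ^ Suc N / real (Suc N) - 0 ^ Suc N / real (Suc N)) {0..1}"
  proof (rule fundamental_theorem_of_calculus)
    fix x :: real
    have "((\<lambda>x. x ^ Suc N / real (Suc N)) has_real_derivative x ^ N) (at x)"
      using DERIV_cdivide[OF DERIV_pow[of "Suc N" x], of "real (Suc N)"] by simp
    then show "((\<lambda>x. x ^ Suc N / real (Suc N)) has_vector_derivative x ^ N) (at x within {0..1})"
      by (simp add: has_real_derivative_iff_has_vector_derivative has_vector_derivative_at_within)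
  qed simp
  then show ?thesis by simp
qed

lemma wbounded_cesaro_vanishing:
  assumes w: "is_weight v" and t: "0 \<le> t" "t < 1" and hol: "f holomorphic_on disc"
    and f: "vanishes_to_order N f" and B: "wbounded v f B"
  shows "wbounded v (cesaro t f) (B / (real (Suc N) * (1 - t)))"
  unfolding wbounded_def
proof
  fix z assume z: "z \<in> disc"
  have vz: "0 < v (cmod z)" using weight_pos_norm[OF w z] .
  let ?g = "\<lambda>s::real. f (of_real s * z) / (1 - of_real t * (of_real s * z))"
  let ?K = "B / (v (cmod z) * (1 - t))"
  have le: "norm (?g s) \<le> s ^ N * ?K" if s: "s \<in> {0..1}" for s
  proof -
    have "cmod (f (of_real s * z)) \<le> s ^ N * B / v (cmod z)"
      using norm_vanishing_scaled_le[OF w f B z] s vz by (simp add: field_simps)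
    moreover have "1 - t \<le> cmod (1 - of_real t * (of_real s * z))"
      using norm_one_minus_ge[OF t(1)] scaled_in_disc(2)[OF z] s z by force
    ultimately have "norm (?g s) \<le> (s ^ N * B / v (cmod z)) / (1 - t)"
      unfolding norm_divide using t s vz wbounded_nonneg[OF w B] by (intro frac_le) auto
    then show ?thesis by simp
  qed
  have int: "((\<lambda>s. s ^ N * ?K) has_integral 1 / real (Suc N) * ?K) {0..1}"
    by (rule has_integral_mult_left[OF power_has_integral_01])
  have "cmod (cesaro t f z) \<le> 1 / real (Suc N) * ?K"
    using integral_norm_bound_integral[OF has_integral_integrable[OF cesaro_has_integral[OF hol z t]]
        has_integral_integrable[OF int] le]
      cesaro_eq_integral[OF hol z t] integral_unique[OF int]
    by (simp only:)
  then have "cmod (cesaro t f z) * v (cmod z) \<le> 1 / real (Suc N) * ?K * v (cmod z)"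
    by (rule mult_right_mono[OF _ less_imp_le[OF vz]])
  also have "\<dots> = B / (real (Suc N) * (1 - t))" using vz t by (simp add: divide_simps)
  finally show "cmod (cesaro t f z) * v (cmod z) \<le> B / (real (Suc N) * (1 - t))" .
qed

lemma wbounded_cesaro:
  "is_weight v \<Longrightarrow> 0 \<le> t \<Longrightarrow> t < 1 \<Longrightarrow> f holomorphic_on disc \<Longrightarrow> wbounded v f B \<Longrightarrow>
    wbounded v (cesaro t f) (B / (1 - t))"
  using wbounded_cesaro_vanishing[of v t f 0 B] vanishes_to_order_0 by simp

lemma vanishes_to_order_cesaro:
  assumes t: "0 \<le> t" "t < 1" and hol: "f holomorphic_on disc" and f: "vanishes_to_order N f"
  shows "vanishes_to_order N (cesaro t f)"
proof -
  obtain h where h: "h holomorphic_on disc" and fh: "\<And>w. w \<in> disc \<Longrightarrow> f w = w ^ N * h w"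
    using f unfolding vanishes_to_order_def by blast
  let ?H = "\<lambda>z. integral {0..1} (\<lambda>s. of_real s ^ N * h (of_real s * z) / (1 - of_real t * (of_real s * z)))"
  have "cesaro t f z = z ^ N * ?H z" if z: "z \<in> disc" for z
  proof -
    have "cesaro t f z = integral {0..1} (\<lambda>s. z ^ N * (of_real s ^ N * h (of_real s * z) / (1 - of_real t * (of_real s * z))))"
      unfolding cesaro_eq_integral[OF hol z t]
    proof (rule integral_cong)
      fix s :: real assume "s \<in> {0..1}"
      then have "of_real s * z \<in> disc" using scaled_in_disc(1)[OF z] by simp
      then show "f (of_real s * z) / (1 - of_real t * (of_real s * z))
          = z ^ N * (of_real s ^ N * h (of_real s * z) / (1 - of_real t * (of_real s * z)))"
        using fh by (simp add: power_mult_distrib)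
    qed
    then show ?thesis by (simp only: integral_mult_right)
  qed
  then show ?thesis
    unfolding vanishes_to_order_def using holomorphic_on_cesaro_integral[OF h t] by blast
qed

lemma cesaro_iterate:
  assumes w: "is_weight v" and t: "0 \<le> t" "t < 1" and hol: "r holomorphic_on disc"
    and r: "vanishes_to_order N r" and B: "wbounded v r B"
  shows "(cesaro t ^^ k) r holomorphic_on disc \<and> vanishes_to_order N ((cesaro t ^^ k) r)
    \<and> wbounded v ((cesaro t ^^ k) r) (B * (1 / (real (Suc N) * (1 - t))) ^ k)"
proof (induction k)
  case 0
  then show ?case using hol r B by simp
next
  case (Suc k)
  then have "wbounded v (cesaro t ((cesaro t ^^ k) r)) (B * (1 / (real (Suc N) * (1 - t))) ^ k / (real (Suc N) * (1 - t)))"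
    using wbounded_cesaro_vanishing[OF w t] by blast
  then show ?case
    using Suc cesaro_holomorphic[OF _ t] vanishes_to_order_cesaro[OF t] by (simp add: field_simps)
qed

section \<open>The resolvent\<close>

lemma wbounded_series_uniform_limit:
  assumes w: "is_weight v" and bound: "\<And>k. wbounded v (p k) (B * x ^ k)"
    and x: "0 \<le> x" "x < 1" and \<rho>: "\<rho> < 1"
  shows "uniform_limit (cball 0 \<rho>) (\<lambda>n z. \<Sum>k<n. p k z) (\<lambda>z. \<Sum>k. p k z) sequentially"
proof (rule Weierstrass_m_test)
  show "summable (\<lambda>k. B / v \<rho> * x ^ k)"
    using x by (intro summable_mult summable_geometric) simp
  fix k and z :: complex assume "z \<in> cball 0 \<rho>"
  then show "norm (p k z) \<le> B / v \<rho> * x ^ k"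
    using wbounded_norm_le[OF w bound, of z \<rho> k] \<rho> by simp
qed

lemma summable_wbounded_series:
  assumes w: "is_weight v" and bound: "\<And>k. wbounded v (p k) (B * x ^ k)"
    and x: "0 \<le> x" "x < 1" and z: "z \<in> disc"
  shows "(\<lambda>k. p k z) sums (\<Sum>k. p k z)"
    and "cmod (\<Sum>k. p k z) * v (cmod z) \<le> B / (1 - x)"
proof -
  have vz: "0 < v (cmod z)" using weight_pos_norm[OF w z] .
  have geometric: "(\<lambda>k. B / v (cmod z) * x ^ k) sums (B / v (cmod z) / (1 - x))"
    using sums_mult[OF geometric_sums[of x], of "B / v (cmod z)"] x by simp
  have pointwise: "cmod (p k z) \<le> B / v (cmod z) * x ^ k" for k
    using wbounded_norm_le[OF w bound, of z "cmod z" k] z by simp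
  show "(\<lambda>k. p k z) sums (\<Sum>k. p k z)"
    using summable_comparison_test'[OF sums_summable[OF geometric] pointwise] by (simp add: summable_sums)
  have "cmod (\<Sum>k. p k z) \<le> B / v (cmod z) / (1 - x)"
    using norm_suminf_le[OF pointwise sums_summable[OF geometric]] sums_unique[OF geometric] by simp
  then have "cmod (\<Sum>k. p k z) * v (cmod z) \<le> B / v (cmod z) / (1 - x) * v (cmod z)"
    by (rule mult_right_mono[OF _ less_imp_le[OF vz]])
  then show "cmod (\<Sum>k. p k z) * v (cmod z) \<le> B / (1 - x)"
    using vz by simp
qed

lemma holomorphic_on_wbounded_series:
  assumes w: "is_weight v" and hol: "\<And>k. p k holomorphic_on disc"
    and bound: "\<And>k. wbounded v (p k) (B * x ^ k)" and x: "0 \<le> x" "x < 1"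
  shows "(\<lambda>z. \<Sum>k. p k z) holomorphic_on disc"
proof (rule holomorphic_uniform_sequence[OF open_ball])
  show "(\<lambda>z. \<Sum>k<n. p k z) holomorphic_on disc" for n
    by (intro holomorphic_intros hol)
next
  fix z :: complex assume z: "z \<in> disc"
  define d where "d = (1 - cmod z) / 2"
  have "cball z d \<subseteq> cball 0 ((1 + cmod z) / 2)"
    by (subst cball_subset_cball_iff) (simp add: d_def dist_norm field_simps)
  moreover have "cball 0 ((1 + cmod z) / 2) \<subseteq> disc" using z by auto
  moreover have "uniform_limit (cball 0 ((1 + cmod z) / 2)) (\<lambda>n z. \<Sum>k<n. p k z) (\<lambda>z. \<Sum>k. p k z) sequentially"
    using z by (intro wbounded_series_uniform_limit[OF w bound x]) simp
  ultimately show "\<exists>d>0. cball z d \<subseteq> disc \<and> uniform_limit (cball z d) (\<lambda>n z. \<Sum>k<n. p k z) (\<lambda>z. \<Sum>k. p k z) sequentially"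
    using z by (intro exI[of _ d]) (auto simp: d_def intro: uniform_limit_on_subset)
qed

lemma cesaro_wbounded_series:
  assumes w: "is_weight v" and t: "0 \<le> t" "t < 1" and hol: "\<And>k. p k holomorphic_on disc"
    and bound: "\<And>k. wbounded v (p k) (B * x ^ k)" and x: "0 \<le> x" "x < 1" and z: "z \<in> disc"
  shows "(\<lambda>k. cesaro t (p k) z) sums cesaro t (\<lambda>z. \<Sum>k. p k z) z"
proof -
  have "(\<lambda>n. cesaro t (\<lambda>z. \<Sum>k<n. p k z) z) \<longlonglongrightarrow> cesaro t (\<lambda>z. \<Sum>k. p k z) z"
    using z by (intro cesaro_uniform_limit[OF t z] wbounded_series_uniform_limit[OF w bound x]
        holomorphic_intros hol holomorphic_on_wbounded_series[OF w hol bound x]) simp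
  moreover have "cesaro t (\<lambda>z. \<Sum>k<n. p k z) z = (\<Sum>k<n. cesaro t (p k) z)" for n
    using hol by (intro cesaro_sum[OF _ _ z t]) auto
  ultimately show ?thesis
    unfolding sums_def by simp
qed

lemma sums_shift_eq:
  fixes p q :: "nat \<Rightarrow> 'a::real_normed_field"
  assumes "p sums u" and "q sums w" and "\<And>k. c * p (Suc k) = q k"
  shows "c * u = c * p 0 + w"
proof -
  have "(\<lambda>k. c * p (Suc k)) sums (c * u - c * p 0)"
    using sums_mult[OF assms(1), of c] by (subst sums_Suc_iff) simp
  then have "q sums (c * u - c * p 0)"
    using assms(3) by simp
  then show ?thesis
    using sums_unique2[OF assms(2)] by simp
qed

text \<open>The Neumann series \<open>u = \<Sum>k. C_t\<^sup>k r / c\<^sup>k\<^sup>+\<^sup>1\<close> converges because \<open>C_t\<close> has norm at most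
  \<open>1/((N+1)(1-t)) < |c|\<close> on functions vanishing to order \<open>N\<close>.\<close>
lemma cesaro_neumann_solution:
  assumes w: "is_weight v" and t: "0 \<le> t" "t < 1" and hol: "r holomorphic_on disc"
    and r: "vanishes_to_order N r" and B: "wbounded v r B"
    and c: "1 / (real (Suc N) * (1 - t)) < cmod c"
  obtains u where "u holomorphic_on disc" "wbounded v u (B / (cmod c - 1 / (real (Suc N) * (1 - t))))"
    "\<And>z. z \<in> disc \<Longrightarrow> c * u z - cesaro t u z = r z"
proof -
  define q where "q = 1 / (real (Suc N) * (1 - t))"
  define x where "x = q / cmod c"
  define p where "p k = (\<lambda>z. (1 / c ^ Suc k) * (cesaro t ^^ k) r z)" for k
  define u where "u = (\<lambda>z. \<Sum>k. p k z)"
  have q: "0 < q" "q < cmod c" using t c by (simp_all add: q_def)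
  then have x: "0 \<le> x" "x < 1" and c0: "c \<noteq> 0" by (auto simp: x_def divide_less_eq)
  note iter = cesaro_iterate[OF w t hol r B, folded q_def]
  have p_hol: "p k holomorphic_on disc" for k
    unfolding p_def using iter by (intro holomorphic_intros) auto
  have "wbounded v (p k) (cmod (1 / c ^ Suc k) * (B * q ^ k))" for k
    unfolding p_def using iter by (intro wbounded_cmult w) auto
  then have p_bound: "wbounded v (p k) (B / cmod c * x ^ k)" for k
    by (simp add: x_def norm_mult norm_divide norm_power power_divide field_simps)
  have u_hol: "u holomorphic_on disc"
    unfolding u_def by (rule holomorphic_on_wbounded_series[OF w p_hol p_bound x])
  have "wbounded v u (B / cmod c / (1 - x))"
    unfolding wbounded_def u_def using summable_wbounded_series(2)[OF w p_bound x] by blast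
  moreover have "B / cmod c / (1 - x) = B / (cmod c - q)"
    using q c0 by (simp add: x_def field_simps)
  ultimately have u_bound: "wbounded v u (B / (cmod c - q))"
    by (simp only:)
  have "c * u z - cesaro t u z = r z" if z: "z \<in> disc" for z
  proof -
    have "c * p (Suc k) z = cesaro t (p k) z" for k
      using cesaro_cmult[OF conjunct1[OF iter[of k]] z t, of "1 / c ^ Suc k"] c0 by (simp add: p_def)
    from sums_shift_eq[OF summable_wbounded_series(1)[OF w p_bound x z]
        cesaro_wbounded_series[OF w t p_hol p_bound x z] this]
    show ?thesis
      using c0 by (simp add: u_def p_def)
  qed
  with u_hol u_bound show ?thesis
    unfolding q_def by (rule that)
qed

text \<open>Subtracting the right multiple of the eigenfunction \<open>z\<^sup>j / (1 - t z)\<^sup>j\<^sup>+\<^sup>1\<close> raises the order of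
  vanishing at the origin by one; its coefficient is controlled by the maximum modulus principle.\<close>
lemma vanishing_order_raise:
  assumes w: "is_weight v" and t: "0 \<le> t" "t < 1"
    and r: "vanishes_to_order j r" and B: "wbounded v r B"
  obtains \<beta> where "cmod \<beta> \<le> B / ((1/2) ^ j * v (1/2))"
    "vanishes_to_order (Suc j) (\<lambda>z. r z - \<beta> * cesaro_eigenfun t j z)"
    "wbounded v (\<lambda>z. r z - \<beta> * cesaro_eigenfun t j z) (B + cmod \<beta> * (v 0 / (1 - t) ^ Suc j))"
proof -
  obtain h where h: "h holomorphic_on disc" and rh: "\<And>w. w \<in> disc \<Longrightarrow> r w = w ^ j * h w"
    using r unfolding vanishes_to_order_def by blast
  have "cmod (h 0) \<le> B / ((1/2) ^ j * v (1/2))"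
    by (rule norm_vanishing_quotient_le[OF w h rh B]) auto
  moreover have "vanishes_to_order (Suc j) (\<lambda>z. r z - h 0 * cesaro_eigenfun t j z)"
  proof (rule vanishes_to_order_SucI)
    show "(\<lambda>z. h z - h 0 / (1 - of_real t * z) ^ Suc j) holomorphic_on disc"
      using one_minus_nonzero[OF t] by (intro holomorphic_intros h) auto
  qed (auto simp: rh cesaro_eigenfun_def algebra_simps)
  moreover have "wbounded v (\<lambda>z. r z - h 0 * cesaro_eigenfun t j z) (B + cmod (h 0) * (v 0 / (1 - t) ^ Suc j))"
    using wbounded_lincomb[OF w B wbounded_cesaro_eigenfun[OF w t, of j], of 1 "- h 0"] by simp
  ultimately show ?thesis by (rule that)
qed

definition eigenfun_split :: "(real \<Rightarrow> real) \<Rightarrow> real \<Rightarrow> nat \<Rightarrow> real \<Rightarrow> bool" where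
  "eigenfun_split v t N K \<longleftrightarrow> (\<forall>g B. g holomorphic_on disc \<longrightarrow> wbounded v g B \<longrightarrow>
    (\<exists>\<beta> r. (\<forall>z\<in>disc. g z = (\<Sum>m<N. \<beta> m * cesaro_eigenfun t m z) + r z) \<and> r holomorphic_on disc
      \<and> vanishes_to_order N r \<and> wbounded v r (K * B) \<and> (\<forall>m<N. cmod (\<beta> m) \<le> K * B)))"

lemma eigenfun_split_0: "eigenfun_split v t 0 1"
  unfolding eigenfun_split_def by (auto simp: vanishes_to_order_0)

lemma eigenfun_split_Suc:
  assumes w: "is_weight v" and t: "0 \<le> t" "t < 1" and K0: "0 \<le> K" and K: "eigenfun_split v t j K"
  shows "\<exists>K'\<ge>0. eigenfun_split v t (Suc j) K'"
proof -
  define C where "C = 1 / ((1/2) ^ j * v (1/2))"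
  define E where "E = v 0 / (1 - t) ^ Suc j"
  have C0: "0 \<le> C" and E0: "0 \<le> E"
    using weight_pos[OF w, of "1/2"] weight_pos[OF w, of 0] t by (simp_all add: C_def E_def)
  have "eigenfun_split v t (Suc j) (K * (1 + C * E + C))"
    unfolding eigenfun_split_def
  proof (intro allI impI)
    fix g B assume g: "g holomorphic_on disc" and B: "wbounded v g B"
    obtain \<beta> r where gr: "\<forall>z\<in>disc. g z = (\<Sum>m<j. \<beta> m * cesaro_eigenfun t m z) + r z"
      and hol: "r holomorphic_on disc" and r: "vanishes_to_order j r" and rB: "wbounded v r (K * B)"
      and \<beta>: "\<forall>m<j. cmod (\<beta> m) \<le> K * B"
      using K g B unfolding eigenfun_split_def by blast
    obtain b where b: "cmod b \<le> K * B * C"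
      and r': "vanishes_to_order (Suc j) (\<lambda>z. r z - b * cesaro_eigenfun t j z)"
      and r'B: "wbounded v (\<lambda>z. r z - b * cesaro_eigenfun t j z) (K * B + cmod b * E)"
      using vanishing_order_raise[OF w t r rB] unfolding C_def E_def by auto
    have KBC: "0 \<le> K * B" "0 \<le> K * B * C"
      using K0 C0 wbounded_nonneg[OF w B] by simp_all
    then have "K * B + cmod b * E \<le> K * (1 + C * E + C) * B" "K * B * C \<le> K * (1 + C * E + C) * B"
      using mult_right_mono[OF b E0] mult_nonneg_nonneg[OF KBC(2) E0] by (simp_all add: algebra_simps)
    moreover have "(\<lambda>z. r z - b * cesaro_eigenfun t j z) holomorphic_on disc"
      using cesaro_eigenfun_holomorphic[OF t] by (intro holomorphic_intros hol) auto
    moreover have "\<forall>z\<in>disc. g z = (\<Sum>m<Suc j. (\<beta>(j := b)) m * cesaro_eigenfun t m z) + (r z - b * cesaro_eigenfun t j z)"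
      using gr by simp
    moreover have "K * B \<le> K * (1 + C * E + C) * B"
      using KBC mult_nonneg_nonneg[OF KBC(2) E0] by (simp add: algebra_simps)
    ultimately show "\<exists>\<beta> r. (\<forall>z\<in>disc. g z = (\<Sum>m<Suc j. \<beta> m * cesaro_eigenfun t m z) + r z)
        \<and> r holomorphic_on disc \<and> vanishes_to_order (Suc j) r \<and> wbounded v r (K * (1 + C * E + C) * B)
        \<and> (\<forall>m<Suc j. cmod (\<beta> m) \<le> K * (1 + C * E + C) * B)"
      using r' r'B \<beta> b
      by (intro exI[of _ "\<beta>(j := b)"] exI[of _ "\<lambda>z. r z - b * cesaro_eigenfun t j z"])
         (auto simp: less_Suc_eq intro: wbounded_mono order_trans)
  qed
  then show ?thesis
    using K0 C0 E0 by (intro exI[of _ "K * (1 + C * E + C)"]) auto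
qed

lemma eigenfun_split_exists:
  assumes "is_weight v" "0 \<le> t" "t < 1"
  shows "\<exists>K\<ge>0. eigenfun_split v t N K"
proof (induction N)
  case 0
  show ?case using eigenfun_split_0[of v t] by (intro exI[of _ 1]) simp
next
  case (Suc j)
  then show ?case using eigenfun_split_Suc[OF assms] by blast
qed

lemma cesaro_eigenfun_sum_solution:
  fixes \<beta> :: "nat \<Rightarrow> complex" and N :: nat
  assumes w: "is_weight v" and t: "0 \<le> t" "t < 1" and c: "\<And>m. c \<noteq> 1 / of_nat (Suc m)"
    and S_def: "S = (\<lambda>z. \<Sum>m<N. \<beta> m / (c - 1 / of_nat (Suc m)) * cesaro_eigenfun t m z)"
  shows "S holomorphic_on disc"
    and "\<And>z. z \<in> disc \<Longrightarrow> c * S z - cesaro t S z = (\<Sum>m<N. \<beta> m * cesaro_eigenfun t m z)"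
    and "wbounded v S (\<Sum>m<N. cmod (\<beta> m) / cmod (c - 1 / of_nat (Suc m)) * (v 0 / (1 - t) ^ Suc m))"
proof -
  define \<gamma> where "\<gamma> m = \<beta> m / (c - 1 / of_nat (Suc m))" for m
  have S_eq: "S = (\<lambda>z. \<Sum>m<N. \<gamma> m * cesaro_eigenfun t m z)"
    by (simp add: S_def \<gamma>_def)
  show "S holomorphic_on disc"
    unfolding S_eq using cesaro_eigenfun_holomorphic[OF t] by (intro holomorphic_intros)
  show "c * S z - cesaro t S z = (\<Sum>m<N. \<beta> m * cesaro_eigenfun t m z)" if z: "z \<in> disc" for z
  proof -
    have "cesaro t S z = (\<Sum>m<N. \<gamma> m * cesaro t (cesaro_eigenfun t m) z)"
      unfolding S_eq using z cesaro_eigenfun_holomorphic[OF t]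
      by (simp add: cesaro_sum[OF _ _ z t] cesaro_cmult[OF _ z t] holomorphic_intros)
    then have "c * S z - cesaro t S z
        = (\<Sum>m<N. \<gamma> m * (c * cesaro_eigenfun t m z - cesaro t (cesaro_eigenfun t m) z))"
      unfolding S_eq by (simp add: sum_distrib_left sum_subtractf[symmetric] algebra_simps)
    also have "\<dots> = (\<Sum>m<N. \<beta> m * cesaro_eigenfun t m z)"
      using c by (simp add: cesaro_eigenfun_shifted[OF t z] \<gamma>_def)
    finally show ?thesis .
  qed
  have "wbounded v S (\<Sum>m<N. cmod (\<gamma> m) * (v 0 / (1 - t) ^ Suc m))"
    unfolding S_eq by (intro wbounded_sum[OF w] wbounded_cmult[OF w] wbounded_cesaro_eigenfun[OF w t]) simp
  then show "wbounded v S (\<Sum>m<N. cmod (\<beta> m) / cmod (c - 1 / of_nat (Suc m)) * (v 0 / (1 - t) ^ Suc m))"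
    by (simp add: \<gamma>_def norm_divide)
qed

text \<open>Away from the eigenvalues and \<open>0\<close>, split off finitely many eigenfunctions so that the rest
  vanishes to an order \<open>N\<close> with \<open>1/((N+1)(1-t)) < |c|\<close>, and invert the two parts separately.\<close>
lemma cesaro_resolvent:
  assumes w: "is_weight v" and t: "0 \<le> t" "t < 1"
    and c0: "c \<noteq> 0" and c: "\<And>m. c \<noteq> 1 / of_nat (Suc m)"
  obtains L where "\<And>g B. g holomorphic_on disc \<Longrightarrow> wbounded v g B \<Longrightarrow>
    \<exists>u. u holomorphic_on disc \<and> wbounded v u (L * B) \<and> (\<forall>z\<in>disc. c * u z - cesaro t u z = g z)"
proof -
  obtain N where N: "inverse (real (Suc N)) < cmod c * (1 - t)"
    using reals_Archimedean[of "cmod c * (1 - t)"] c0 t by auto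
  have "0 < real (Suc N) * (1 - t)" using t by simp
  then have qc: "1 / (real (Suc N) * (1 - t)) < cmod c"
    using N by (simp add: pos_divide_less_eq field_simps)
  define q where "q = 1 / (real (Suc N) * (1 - t))"
  define E where "E K m = K / cmod (c - 1 / of_nat (Suc m)) * (v 0 / (1 - t) ^ Suc m)" for K m
  obtain K where K: "eigenfun_split v t N K"
    using eigenfun_split_exists[OF w t] by blast
  define L where "L = (\<Sum>m<N. E K m) + K / (cmod c - q)"
  have "\<exists>u. u holomorphic_on disc \<and> wbounded v u (L * B) \<and> (\<forall>z\<in>disc. c * u z - cesaro t u z = g z)"
    if g: "g holomorphic_on disc" and B: "wbounded v g B" for g B
  proof -
    obtain \<beta> r where gr: "\<forall>z\<in>disc. g z = (\<Sum>m<N. \<beta> m * cesaro_eigenfun t m z) + r z"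
      and hol: "r holomorphic_on disc" and r: "vanishes_to_order N r" and rB: "wbounded v r (K * B)"
      and \<beta>: "\<forall>m<N. cmod (\<beta> m) \<le> K * B"
      using K g B unfolding eigenfun_split_def by blast
    obtain u0 where u0: "u0 holomorphic_on disc" "wbounded v u0 (K * B / (cmod c - q))"
      "\<And>z. z \<in> disc \<Longrightarrow> c * u0 z - cesaro t u0 z = r z"
      using cesaro_neumann_solution[OF w t hol r rB qc] unfolding q_def by blast
    define S where "S = (\<lambda>z. \<Sum>m<N. \<beta> m / (c - 1 / of_nat (Suc m)) * cesaro_eigenfun t m z)"
    note S = cesaro_eigenfun_sum_solution[OF w t c S_def]
    have "(\<Sum>m<N. E (cmod (\<beta> m)) m) \<le> (\<Sum>m<N. E (K * B) m)"
      using \<beta> weight_pos[OF w, of 0] t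
      by (intro sum_mono) (auto simp: E_def intro!: mult_right_mono divide_right_mono)
    then have "wbounded v (\<lambda>z. 1 * S z + 1 * u0 z) ((\<Sum>m<N. E (K * B) m) + K * B / (cmod c - q))"
      using wbounded_lincomb[OF w S(3) u0(2), of 1 1] unfolding E_def by (auto elim: wbounded_mono)
    moreover have "(\<Sum>m<N. E (K * B) m) + K * B / (cmod c - q) = L * B"
      unfolding L_def distrib_right sum_distrib_right E_def by (simp add: mult_ac)
    moreover have "c * (S z + u0 z) - cesaro t (\<lambda>z. S z + u0 z) z = g z" if z: "z \<in> disc" for z
      using S(2)[OF z] u0(3)[OF z] gr z cesaro_add[OF S(1) u0(1) z t] by (simp add: algebra_simps)
    ultimately show ?thesis
      using S(1) u0(1) by (intro exI[of _ "\<lambda>z. S z + u0 z"]) (auto intro: holomorphic_intros)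
  qed
  then show ?thesis by (rule that)
qed

section \<open>Spectra on the weighted spaces\<close>

locale cesaro_space =
  fixes v :: "real \<Rightarrow> real" and t :: real and X :: "(complex \<Rightarrow> complex) set"
  assumes weight: "is_weight v" and t: "0 \<le> t" "t < 1"
    and subset_Hinf: "X \<subseteq> Hinf v"
    and eigenfun_mem: "cesaro_eigenfun t m \<in> X"
    and shift_mem: "f \<in> X \<Longrightarrow> (\<lambda>z. c * f z - cesaro t f z) \<in> X"
    and solution_mem: "c \<noteq> 0 \<Longrightarrow> g \<in> X \<Longrightarrow> u \<in> Hinf v \<Longrightarrow>
      (\<And>z. z \<in> disc \<Longrightarrow> c * u z - cesaro t u z = g z) \<Longrightarrow> u \<in> X"
begin

lemma memD: "f \<in> X \<Longrightarrow> f holomorphic_on disc \<and> (\<exists>B. wbounded v f B)"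
  using subset_Hinf Hinf_iff by blast

lemma pspec_eq: "pspec (cesaro t) X = {1 / of_nat (m + 1) | m. True}"
proof (intro set_eqI iffI)
  fix c assume "c \<in> pspec (cesaro t) X"
  then obtain f z0 where f: "f \<in> X" and z0: "z0 \<in> disc" "f z0 \<noteq> 0"
    and eq: "\<forall>z\<in>disc. c * f z - cesaro t f z = 0"
    unfolding pspec_def by blast
  have hol: "f holomorphic_on disc" using memD[OF f] by blast
  have "cesaro t f z = c * f z" if "z \<in> disc" for z
    using eq that by simp
  from cesaro_eigenvalue[OF t hol z0 this] obtain m where "c = 1 / of_nat (Suc m)" .
  then show "c \<in> {1 / of_nat (m + 1) | m. True}" by auto
next
  fix c :: complex assume "c \<in> {1 / of_nat (m + 1) | m. True}"
  then obtain m where c: "c = 1 / of_nat (Suc m)" by auto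
  have "cesaro_eigenfun t m (1/2) \<noteq> 0"
    by (rule cesaro_eigenfun_nonzero[OF t]) simp_all
  moreover have "c * cesaro_eigenfun t m z - cesaro t (cesaro_eigenfun t m) z = 0" if "z \<in> disc" for z
    using cesaro_eigenfun_shifted[OF t that, of c m] c by simp
  ultimately show "c \<in> pspec (cesaro t) X"
    unfolding pspec_def using eigenfun_mem[of m] by (intro CollectI bexI[of _ "cesaro_eigenfun t m"] conjI) auto
qed

text \<open>Test the left inverse on \<open>cesaro_eigenfun t m\<close>, on which \<open>c I - C_t\<close> acts as multiplication
  by \<open>c - 1/(m+1)\<close>.\<close>
lemma left_inverse_norm_ge:
  assumes S_left: "\<forall>f\<in>X. \<forall>z\<in>disc. S (\<lambda>w. c * f w - cesaro t f w) z = f z"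
    and S_bound: "\<forall>g\<in>X. wnorm v (S g) \<le> C * wnorm v g"
  shows "1 \<le> C * cmod (c - 1 / of_nat (Suc m))"
proof -
  let ?e = "cesaro_eigenfun t m" and ?d = "c - 1 / of_nat (Suc m)"
  let ?g = "\<lambda>w. c * ?e w - cesaro t ?e w"
  have e: "wbounded v ?e (wnorm v ?e)"
    using wbounded_wnorm[OF wbounded_cesaro_eigenfun[OF weight t]] .
  have e_pos: "0 < wnorm v ?e"
    using wnorm_pos[OF weight e, of "1/2"] cesaro_eigenfun_nonzero[OF t, of "1/2"] by simp
  have "wbounded v (\<lambda>z. ?d * ?e z) (cmod ?d * wnorm v ?e)"
    by (rule wbounded_cmult[OF weight e])
  then have g: "wbounded v ?g (cmod ?d * wnorm v ?e)"
    using wbounded_cong[of "\<lambda>z. ?d * ?e z" ?g v] cesaro_eigenfun_shifted[OF t] by simp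
  have g_le: "wnorm v ?g \<le> cmod ?d * wnorm v ?e"
    by (rule wnorm_le[OF g])
  have g_nonneg: "0 \<le> wnorm v ?g"
    by (rule wbounded_nonneg[OF weight wbounded_wnorm[OF g]])
  have "wnorm v ?e = wnorm v (S ?g)"
    using S_left eigenfun_mem by (intro wnorm_cong) auto
  also have "\<dots> \<le> C * wnorm v ?g"
    using S_bound shift_mem[OF eigenfun_mem] by blast
  finally have e_le: "wnorm v ?e \<le> C * wnorm v ?g" .
  show ?thesis
  proof (cases "0 \<le> C")
    case True
    then have "1 * wnorm v ?e \<le> (C * cmod ?d) * wnorm v ?e"
      using e_le mult_left_mono[OF g_le True] by (simp add: mult_ac)
    then show ?thesis using e_pos by (simp only: mult_le_cancel_right)
  next
    case False
    then have "C * wnorm v ?g \<le> 0" using g_nonneg by (simp add: mult_nonpos_nonneg)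
    then show ?thesis using e_le e_pos by linarith
  qed
qed

lemma right_inverse_exists:
  assumes c0: "c \<noteq> 0" and c: "\<And>m. c \<noteq> 1 / of_nat (Suc m)"
  obtains S L where "\<And>g. g \<in> X \<Longrightarrow> S g holomorphic_on disc"
    "\<And>g. g \<in> X \<Longrightarrow> wbounded v (S g) (L * wnorm v g)"
    "\<And>g z. g \<in> X \<Longrightarrow> z \<in> disc \<Longrightarrow> c * S g z - cesaro t (S g) z = g z"
proof -
  obtain L where L: "\<And>g B. g holomorphic_on disc \<Longrightarrow> wbounded v g B \<Longrightarrow>
    \<exists>u. u holomorphic_on disc \<and> wbounded v u (L * B) \<and> (\<forall>z\<in>disc. c * u z - cesaro t u z = g z)"
    by (rule cesaro_resolvent[OF weight t c0 c]) blast
  define R where "R g u \<longleftrightarrow> u holomorphic_on disc \<and> wbounded v u (L * wnorm v g)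
    \<and> (\<forall>z\<in>disc. c * u z - cesaro t u z = g z)" for g u
  define S where "S g = (SOME u. R g u)" for g
  have R: "R g (S g)" if g: "g \<in> X" for g
  proof -
    obtain B where "g holomorphic_on disc" "wbounded v g B"
      using memD[OF g] by blast
    then have "\<exists>u. R g u"
      unfolding R_def by (rule L[OF _ wbounded_wnorm])
    then show ?thesis
      unfolding S_def by (rule someI_ex)
  qed
  show ?thesis
  proof (rule that)
    show "S g holomorphic_on disc" "wbounded v (S g) (L * wnorm v g)" if "g \<in> X" for g
      using R[OF that] unfolding R_def by blast+
    show "c * S g z - cesaro t (S g) z = g z" if "g \<in> X" "z \<in> disc" for g z
      using R[OF that(1)] that(2) unfolding R_def by blast
  qed
qed

lemma not_in_spec:
  assumes c0: "c \<noteq> 0" and c: "\<And>m. c \<noteq> 1 / of_nat (Suc m)"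
  shows "c \<notin> spec (cesaro t) X (wnorm v)"
proof -
  obtain S L where S_hol: "\<And>g. g \<in> X \<Longrightarrow> S g holomorphic_on disc"
    and S_bound: "\<And>g. g \<in> X \<Longrightarrow> wbounded v (S g) (L * wnorm v g)"
    and S_right: "\<And>g z. g \<in> X \<Longrightarrow> z \<in> disc \<Longrightarrow> c * S g z - cesaro t (S g) z = g z"
    by (rule right_inverse_exists[OF c0 c]) blast
  have S_mem: "S g \<in> X" if g: "g \<in> X" for g
  proof (rule solution_mem[OF c0 g])
    show "S g \<in> Hinf v"
      unfolding Hinf_iff using S_hol[OF g] S_bound[OF g] by blast
  qed (rule S_right[OF g])
  have S_left: "S (\<lambda>w. c * f w - cesaro t f w) z = f z" if f: "f \<in> X" and z: "z \<in> disc" for f z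
  proof (rule cesaro_shift_injective[OF t S_hol[OF shift_mem[OF f]] _ c _ z])
    show "f holomorphic_on disc" using memD[OF f] by blast
    show "c * S (\<lambda>w. c * f w - cesaro t f w) w - cesaro t (S (\<lambda>w. c * f w - cesaro t f w)) w
        = c * f w - cesaro t f w" if "w \<in> disc" for w
      using S_right[OF shift_mem[OF f] that] by simp
  qed
  have "\<exists>S. (\<forall>g\<in>X. S g \<in> X) \<and> (\<forall>f\<in>X. \<forall>z\<in>disc. S (\<lambda>w. c * f w - cesaro t f w) z = f z)
      \<and> (\<forall>g\<in>X. \<forall>z\<in>disc. c * S g z - cesaro t (S g) z = g z) \<and> (\<exists>C. \<forall>g\<in>X. wnorm v (S g) \<le> C * wnorm v g)"
    using S_mem S_left S_right wnorm_le[OF S_bound] by (intro exI[of _ S] conjI exI[of _ L] ballI)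
  then show ?thesis
    unfolding spec_def by simp
qed

lemma spec_subset: "spec (cesaro t) X (wnorm v) \<subseteq> {1 / of_nat (m + 1) | m. True} \<union> {0}"
proof
  fix c assume c_spec: "c \<in> spec (cesaro t) X (wnorm v)"
  show "c \<in> {1 / of_nat (m + 1) | m. True} \<union> {0}"
  proof (rule ccontr)
    assume "c \<notin> {1 / of_nat (m + 1) | m. True} \<union> {0}"
    then have "c \<noteq> 0" and "\<And>m. c \<noteq> 1 / of_nat (Suc m)" by auto
    with c_spec show False using not_in_spec by blast
  qed
qed

lemma spec_supset: "{1 / of_nat (m + 1) | m. True} \<union> {0} \<subseteq> spec (cesaro t) X (wnorm v)"
proof
  fix c :: complex assume c: "c \<in> {1 / of_nat (m + 1) | m. True} \<union> {0}"
  show "c \<in> spec (cesaro t) X (wnorm v)"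
    unfolding spec_def
  proof (intro CollectI notI)
    assume "\<exists>S. (\<forall>g\<in>X. S g \<in> X) \<and> (\<forall>f\<in>X. \<forall>z\<in>disc. S (\<lambda>w. c * f w - cesaro t f w) z = f z)
        \<and> (\<forall>g\<in>X. \<forall>z\<in>disc. c * S g z - cesaro t (S g) z = g z) \<and> (\<exists>C. \<forall>g\<in>X. wnorm v (S g) \<le> C * wnorm v g)"
    then obtain S C where "\<forall>f\<in>X. \<forall>z\<in>disc. S (\<lambda>w. c * f w - cesaro t f w) z = f z"
      and "\<forall>g\<in>X. wnorm v (S g) \<le> C * wnorm v g" by blast
    note norm_ge = left_inverse_norm_ge[OF this]
    show False
    proof (cases "c = 0")
      case True
      obtain n where n: "C < real n" using reals_Archimedean2 by blast
      have "1 \<le> C * cmod (c - 1 / of_nat (Suc n))" by (rule norm_ge)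
      also have "\<dots> = C / real (Suc n)"
        using True by (simp add: norm_divide del: of_nat_Suc)
      also have "\<dots> < 1" using n by (simp add: field_simps)
      finally show False by simp
    next
      case False
      then obtain m where "c = 1 / of_nat (Suc m)" using c by auto
      then show False using norm_ge[of m] by simp
    qed
  qed
qed

lemma spec_eq: "spec (cesaro t) X (wnorm v) = {1 / of_nat (m + 1) | m. True} \<union> {0}"
  using spec_subset spec_supset by blast

end

lemma cesaro_space_Hinf:
  assumes w: "is_weight v" and t: "0 \<le> t" "t < 1"
  shows "cesaro_space v t (Hinf v)"
proof
  show "cesaro_eigenfun t m \<in> Hinf v" for m
    by (rule cesaro_eigenfun_Hinf[OF w t])
  show "(\<lambda>z. c * f z - cesaro t f z) \<in> Hinf v" if f_mem: "f \<in> Hinf v" for c f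
  proof -
    obtain B where f: "f holomorphic_on disc" and B: "wbounded v f B"
      using f_mem unfolding Hinf_iff by blast
    have "(\<lambda>z. c * f z - cesaro t f z) holomorphic_on disc"
      by (intro holomorphic_intros f cesaro_holomorphic[OF f t])
    moreover have "wbounded v (\<lambda>z. c * f z + (- 1) * cesaro t f z) (cmod c * B + cmod (- 1) * (B / (1 - t)))"
      by (rule wbounded_lincomb[OF w B wbounded_cesaro[OF w t f B]])
    ultimately show ?thesis
      unfolding Hinf_iff by auto
  qed
qed (use w t in auto)

lemma cesaro_space_H0:
  assumes w: "is_weight v" and v0: "(v \<longlongrightarrow> 0) (at_left 1)" and t: "0 \<le> t" "t < 1"
  shows "cesaro_space v t (H0 v)"
proof
  have cesaro_H0: "cesaro t f \<in> H0 v" if "f \<in> Hinf v" for f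
    using that cesaro_in_H0[OF w v0 t] unfolding Hinf_iff by blast
  show "H0 v \<subseteq> Hinf v"
    using H0_subset_Hinf[OF w] by blast
  show "cesaro_eigenfun t m \<in> H0 v" for m
  proof -
    have "(\<lambda>z. of_nat (Suc m) * cesaro t (cesaro_eigenfun t m) z + 0 * cesaro t (cesaro_eigenfun t m) z) \<in> H0 v"
      using cesaro_eigenfun_Hinf[OF w t] by (intro H0_lincomb[OF w] cesaro_H0)
    then show ?thesis
      by (rule H0_cong) (simp add: cesaro_cesaro_eigenfun[OF t] del: of_nat_Suc)
  qed
  show "(\<lambda>z. c * f z - cesaro t f z) \<in> H0 v" if f: "f \<in> H0 v" for c f
  proof -
    have "(\<lambda>z. c * f z + (- 1) * cesaro t f z) \<in> H0 v"
      by (intro H0_lincomb[OF w f] cesaro_H0 H0_subset_Hinf[OF w f])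
    then show ?thesis
      by (rule H0_cong) simp
  qed
  show "u \<in> H0 v" if "c \<noteq> 0" "g \<in> H0 v" "u \<in> Hinf v"
    and eq: "\<And>z. z \<in> disc \<Longrightarrow> c * u z - cesaro t u z = g z" for c g u
  proof -
    have "(\<lambda>z. (1 / c) * g z + (1 / c) * cesaro t u z) \<in> H0 v"
      by (rule H0_lincomb[OF w \<open>g \<in> H0 v\<close> cesaro_H0[OF \<open>u \<in> Hinf v\<close>]])
    then show ?thesis
    proof (rule H0_cong)
      fix z assume "z \<in> disc"
      then show "1 / c * g z + 1 / c * cesaro t u z = u z"
        using eq[of z] \<open>c \<noteq> 0\<close> by (simp add: field_simps)
    qed
  qed
qed (use w t in auto)

theorem proposition2p8:
  fixes v :: "real \<Rightarrow> real" and t :: real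
  assumes "is_weight v"
    and "(v \<longlongrightarrow> 0) (at_left 1)"
    and "0 \<le> t" and "t < 1"
  shows "pspec (cesaro t) (Hinf v) = {1 / of_nat (m + 1) | m. True}
     \<and> pspec (cesaro t) (H0 v) = {1 / of_nat (m + 1) | m. True}
     \<and> spec (cesaro t) (Hinf v) (wnorm v) = {1 / of_nat (m + 1) | m. True} \<union> {0}
     \<and> spec (cesaro t) (H0 v) (wnorm v) = {1 / of_nat (m + 1) | m. True} \<union> {0}"
proof -
  interpret Hinf: cesaro_space v t "Hinf v"
    by (rule cesaro_space_Hinf[OF assms(1,3,4)])
  interpret H0: cesaro_space v t "H0 v"
    by (rule cesaro_space_H0[OF assms])
  show ?thesis
    using Hinf.pspec_eq H0.pspec_eq Hinf.spec_eq H0.spec_eq by blast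
qed

end
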